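(* Let $(S)\subset (L^2)\subset (S)^{\ast}$ be the Hida Gel'fand triple over white noise space, and let $\diamond$ and $\ast$ be the Wick product and the convolution on $(S)^{\ast}$, defined by $$\Phi\diamond\Psi:=\mathcal{S}^{-1}\big(\mathcal{S}\Phi\cdot\mathcal{S}\Psi\big),\qquad \Phi\ast\Psi:=\mathcal{T}^{-1}\big(\mathcal{T}\Phi\cdot\mathcal{T}\Psi\big),\qquad \Phi,\Psi\in(S)^{\ast},$$ where $\cdot$ denotes the pointwise product of functionals on $S_c(\mathbb{R})$. Then neither product has zero divisors in $(S)^{\ast}$: for all $\Phi,\Psi\in(S)^{\ast}$, if $\Phi\diamond\Psi=0$ then $\Phi=0$ or $\Psi=0$; and if $\Phi\ast\Psi=0$ then $\Phi=0$ or $\Psi=0$.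
   Context: Consider the Gel'fand triple $S(\mathbb{R})\subset L^2(\mathbb{R})\subset S'(\mathbb{R})$ (Schwartz test functions and tempered distributions) and the Gaussian measure $\mu$ on $S'(\mathbb{R})$ with characteristic functional $\int_{S'(\mathbb{R})} e^{i\langle x,f\rangle}\,d\mu(x)=e^{-\frac12\langle f,f\rangle}$, $f\in S(\mathbb{R})$. Put $(L^2):=L^2(S'(\mathbb{R}),\mu)$. Let $H=-\frac{d^2}{dt^2}+t^2+1$ (the harmonic oscillator Hamiltonian with spectrum $\{2k+2: k=0,1,2,\dots\}$) and $\Gamma(H)$ its second quantization acting on $(L^2)$ via the Wiener–Itô chaos decomposition. The space $(S)$ of white noise test functionals is the projective limit of the Hilbert spaces $(S_p)$, $p\ge 0$, obtained by completing $\{\varphi:\|\Gamma(H)^p\varphi\|_{(L^2)}<\infty\}$, and $(S)^{\ast}$ (Hida distributions) is its dual, with duality pairing $\langle\langle\cdot,\cdot\rangle\rangle$ extending the $(L^2)$ inner product (bilinearly). Let $S_c(\mathbb{R})$ be the complexification of $S(\mathbb{R})$. The $\mathcal{S}$-transform of $\Phi\in(S)^{\ast}$ is the functional $(\mathcal{S}\Phi)(\xi)=\langle\langle\Phi, :e^{\langle\cdot,\xi\rangle}:\rangle\rangle$, $\xi\in S_c(\mathbb{R})$, where $:e^{\langle x,\xi\rangle}:=\exp(\langle x,\xi\rangle-\frac12\langle\xi,\xi\rangle)$ (for $\phi\in(L^2)$ and real $\xi$ this equals $\int\phi(x+\xi)\,d\mu(x)$); the $\mathcal{T}$-transform is $(\mathcal{T}\Phi)(\xi)=\langle\langle\Phi,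 e^{i\langle\cdot,\xi\rangle}\rangle\rangle$ (for $\phi\in(L^2)$ this equals $\int\phi(x)e^{i\langle x,\xi\rangle}d\mu(x)$). Both transforms are injective on $(S)^{\ast}$. By the Potthoff–Streit characterization theorem, a functional $F$ on $S_c(\mathbb{R})$ is the $\mathcal{S}$-transform (respectively, the $\mathcal{T}$-transform) of some Hida distribution iff (i) for all $\xi,\eta\in S_c(\mathbb{R})$, $z\mapsto F(z\xi+\eta)$ is entire on $\mathbb{C}$, and (ii) there are constants $K,a,p\ge0$ with $|F(z\xi)|\le K e^{a|z|^2\|H^p\xi\|_2^2}$; such functionals (U-functionals) form an algebra under pointwise multiplication, so $\diamond$ and $\ast$ are well-defined commutative products on $(S)^{\ast}$. *)

theory Defs
  imports "HOL-Analysis.Analysis"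
begin

text \<open>
  Coordinate (Hermite / chaos) model of the Hida Gel'fand triple.
  e_0, e_1, ... are the Hermite functions, the eigenbasis of H with H e_k = (2k+2) e_k.
  A test function xi in S_c(R) is identified with its coefficient sequence
  (xi_k) = (<xi, e_k>), and S_c(R) is exactly the set of complex sequences with
  sum_k |xi_k|^2 (2k+2)^(2p) finite for every p.
  A Hida distribution Phi is identified with its coefficient family (c_alpha) in the
  chaos expansion Phi = sum_alpha c_alpha H_alpha, where alpha ranges over finitely
  supported multi-indices and H_alpha(x) = prod_k h_(alpha_k)(<x,e_k>) (Wick-ordered
  Hermite polynomials, ||H_alpha||^2 = alpha!, Gamma(H) H_alpha = lambda^alpha H_alpha).
\<close>

definition multi_indices :: "(nat \<Rightarrow> nat) set" where
  "multi_indices = {\<alpha>. finite {k. \<alpha> k \<noteq> 0}}"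

definition mi_fact :: "(nat \<Rightarrow> nat) \<Rightarrow> real" where
  "mi_fact \<alpha> = (\<Prod>k\<in>{k. \<alpha> k \<noteq> 0}. fact (\<alpha> k))"

text \<open>eigenvalue of Gamma(H) on H_alpha: prod_k (2k+2)^alpha_k\<close>
definition mi_weight :: "(nat \<Rightarrow> nat) \<Rightarrow> real" where
  "mi_weight \<alpha> = (\<Prod>k\<in>{k. \<alpha> k \<noteq> 0}. (2 * real k + 2) ^ \<alpha> k)"

definition Sc :: "(nat \<Rightarrow> complex) set" where
  "Sc = {\<xi>. \<forall>p::nat. summable (\<lambda>k. (norm (\<xi> k))\<^sup>2 * (2 * real k + 2) ^ (2 * p))}"

definition bil :: "(nat \<Rightarrow> complex) \<Rightarrow> (nat \<Rightarrow> complex) \<Rightarrow> complex" where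
  "bil \<xi> \<eta> = (\<Sum>k. \<xi> k * \<eta> k)"

text \<open>(S)^*: union over p of the spaces (S_{-p})\<close>
definition hida_dist :: "((nat \<Rightarrow> nat) \<Rightarrow> complex) \<Rightarrow> bool" where
  "hida_dist c \<longleftrightarrow> (\<forall>\<alpha>. \<alpha> \<notin> multi_indices \<longrightarrow> c \<alpha> = 0) \<and>
     (\<exists>p::nat. (\<lambda>\<alpha>. mi_fact \<alpha> * (norm (c \<alpha>))\<^sup>2 / mi_weight \<alpha> ^ (2 * p)) summable_on multi_indices)"

text \<open>duality pairing <<Phi, phi>> = sum_alpha alpha! c_alpha a_alpha (bilinear extension of the (L^2) inner product)\<close>
definition dual_pair :: "((nat \<Rightarrow> nat) \<Rightarrow> complex) \<Rightarrow> ((nat \<Rightarrow> nat) \<Rightarrow> complex) \<Rightarrow> complex" where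
  "dual_pair c a = (\<Sum>\<^sub>\<infinity>\<alpha>\<in>multi_indices. of_real (mi_fact \<alpha>) * c \<alpha> * a \<alpha>)"

text \<open>chaos coefficients of the Wick exponential :e^{<.,xi>}: = sum_alpha xi^alpha / alpha! H_alpha\<close>
definition wick_exp :: "(nat \<Rightarrow> complex) \<Rightarrow> (nat \<Rightarrow> nat) \<Rightarrow> complex" where
  "wick_exp \<xi> \<alpha> = (\<Prod>k\<in>{k. \<alpha> k \<noteq> 0}. \<xi> k ^ \<alpha> k) / of_real (mi_fact \<alpha>)"

text \<open>chaos coefficients of e^{i<.,xi>} = e^{-<xi,xi>/2} :e^{<., i xi>}:\<close>
definition char_exp :: "(nat \<Rightarrow> complex) \<Rightarrow> (nat \<Rightarrow> nat) \<Rightarrow> complex" where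
  "char_exp \<xi> \<alpha> = exp (- bil \<xi> \<xi> / 2) * wick_exp (\<lambda>k. \<i> * \<xi> k) \<alpha>"

definition S_transform :: "((nat \<Rightarrow> nat) \<Rightarrow> complex) \<Rightarrow> (nat \<Rightarrow> complex) \<Rightarrow> complex" where
  "S_transform c \<xi> = dual_pair c (wick_exp \<xi>)"

definition T_transform :: "((nat \<Rightarrow> nat) \<Rightarrow> complex) \<Rightarrow> (nat \<Rightarrow> complex) \<Rightarrow> complex" where
  "T_transform c \<xi> = dual_pair c (char_exp \<xi>)"

definition wick :: "((nat \<Rightarrow> nat) \<Rightarrow> complex) \<Rightarrow> ((nat \<Rightarrow> nat) \<Rightarrow> complex) \<Rightarrow> ((nat \<Rightarrow> nat) \<Rightarrow> complex)" where
  "wick c d = (THE e. hida_dist e \<and> (\<forall>\<xi>\<in>Sc. S_transform e \<xi> = S_transform c \<xi> * S_transform d \<xi>))"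

definition conv :: "((nat \<Rightarrow> nat) \<Rightarrow> complex) \<Rightarrow> ((nat \<Rightarrow> nat) \<Rightarrow> complex) \<Rightarrow> ((nat \<Rightarrow> nat) \<Rightarrow> complex)" where
  "conv c d = (THE e. hida_dist e \<and> (\<forall>\<xi>\<in>Sc. T_transform e \<xi> = T_transform c \<xi> * T_transform d \<xi>))"

end

theory Submission
  imports Defs "HOL-Complex_Analysis.Cauchy_Integral_Formula"
begin

text \<open>In chaos coordinates the \<open>S\<close>-transform of \<open>\<Phi> = \<Sum>\<^sub>\<alpha> c\<^sub>\<alpha> H\<^sub>\<alpha>\<close> is the absolutely convergent
  power series \<open>\<Sum>\<^sub>\<alpha> c\<^sub>\<alpha> \<xi>\<^sup>\<alpha>\<close> in the Hermite coordinates of \<open>\<xi>\<close>, so the Wick product is the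
  Cauchy product of coefficient families. Ordering multi-indices by degree and then by a base-\<open>B\<close>
  code, the product of two nonzero families has the product of their leading coefficients as a
  coefficient, hence is nonzero. Since \<open>T \<Phi> \<xi> = e\<^bsup>-\<langle>\<xi>,\<xi>\<rangle>/2\<^esup> S \<Phi> (i \<xi>)\<close>, the convolution
  \<open>\<Phi> * \<Psi>\<close> is the Wick product of \<open>\<Phi> \<diamond> \<Psi>\<close> with the nonzero distribution whose \<open>S\<close>-transform
  is \<open>e\<^bsup>\<langle>\<eta>,\<eta>\<rangle>/2\<^esup>\<close>. That the defining descriptions of both products are unique rests on the
  injectivity of \<open>S\<close>, seen by restricting \<open>S \<Phi>\<close> to the curves \<open>\<xi>\<^sub>k = t u\<^bsup>B\<^sup>k\<^esup>\<close>.\<close>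

section \<open>Finitely supported multi-indices\<close>

definition indices_below :: "nat \<Rightarrow> (nat \<Rightarrow> nat) set" where
  "indices_below N = {\<alpha>. \<forall>k\<ge>N. \<alpha> k = 0}"

definition monom :: "(nat \<Rightarrow> 'a::comm_monoid_mult) \<Rightarrow> (nat \<Rightarrow> nat) \<Rightarrow> 'a" where
  "monom \<xi> \<alpha> = (\<Prod>k\<in>{k. \<alpha> k \<noteq> 0}. \<xi> k ^ \<alpha> k)"

definition deg :: "(nat \<Rightarrow> nat) \<Rightarrow> nat" where
  "deg \<alpha> = (\<Sum>k\<in>{k. \<alpha> k \<noteq> 0}. \<alpha> k)"

definition encode :: "nat \<Rightarrow> (nat \<Rightarrow> nat) \<Rightarrow> nat" where
  "encode B \<alpha> = (\<Sum>k\<in>{k. \<alpha> k \<noteq> 0}. \<alpha> k * B ^ k)"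

lemma support_indices_below: "\<alpha> \<in> indices_below N \<Longrightarrow> {k. \<alpha> k \<noteq> 0} \<subseteq> {..<N}"
  unfolding indices_below_def by (auto simp: not_less[symmetric])

lemma indices_below_subset: "indices_below N \<subseteq> multi_indices"
  unfolding multi_indices_def using support_indices_below finite_subset by blast

lemma indices_below_mono: "N \<le> M \<Longrightarrow> indices_below N \<subseteq> indices_below M"
  unfolding indices_below_def by auto

lemma multi_indices_below:
  assumes "\<alpha> \<in> multi_indices"
  obtains N where "\<alpha> \<in> indices_below N"
proof -
  from assms have "finite {k. \<alpha> k \<noteq> 0}" by (simp add: multi_indices_def)
  then obtain N where "\<forall>k\<in>{k. \<alpha> k \<noteq> 0}. k < N" using finite_nat_bounded by blast
  then have "\<alpha> \<in> indices_below N" unfolding indices_below_def using not_less by auto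
  then show thesis by (rule that)
qed

lemma finite_indices_below:
  assumes "finite F" "F \<subseteq> multi_indices"
  obtains N where "F \<subseteq> indices_below N"
  using assms
proof (induction F arbitrary: thesis rule: finite_induct)
  case empty
  then show ?case by auto
next
  case (insert x F)
  then obtain N where N: "F \<subseteq> indices_below N" by auto
  obtain M where M: "x \<in> indices_below M" using insert.prems multi_indices_below by blast
  have "insert x F \<subseteq> indices_below (max N M)"
    using N M indices_below_mono[of N "max N M"] indices_below_mono[of M "max N M"] by auto
  then show ?case by (rule insert.prems(1))
qed

lemma indices_below_common:
  assumes "\<alpha> \<in> multi_indices" "\<beta> \<in> multi_indices"
  obtains N where "\<alpha> \<in> indices_below N" "\<beta> \<in> indices_below N"
  using finite_indices_below[of "{\<alpha>, \<beta>}"] assms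
  by (metis empty_subsetI finite.emptyI finite.insertI insert_subset)

lemma add_indices_below:
  "\<alpha> \<in> indices_below N \<Longrightarrow> \<beta> \<in> indices_below N \<Longrightarrow> (\<lambda>k. \<alpha> k + \<beta> k) \<in> indices_below N"
  unfolding indices_below_def by auto

lemma diff_indices_below: "\<gamma> \<in> indices_below N \<Longrightarrow> (\<lambda>k. \<gamma> k - \<alpha> k) \<in> indices_below N"
  unfolding indices_below_def by auto

lemma add_multi_indices:
  assumes "\<alpha> \<in> multi_indices" "\<beta> \<in> multi_indices"
  shows "(\<lambda>k. \<alpha> k + \<beta> k) \<in> multi_indices"
proof -
  obtain N where "\<alpha> \<in> indices_below N" "\<beta> \<in> indices_below N"
    using indices_below_common[OF assms] .
  then show ?thesis using add_indices_below indices_below_subset by blast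
qed

lemma diff_multi_indices:
  assumes "\<gamma> \<in> multi_indices"
  shows "(\<lambda>k. \<gamma> k - \<alpha> k) \<in> multi_indices"
proof -
  obtain N where "\<gamma> \<in> indices_below N" using multi_indices_below[OF assms] .
  then show ?thesis using diff_indices_below indices_below_subset by blast
qed

lemma prod_support_indices_below:
  assumes "\<alpha> \<in> indices_below N" "\<And>k. h k 0 = 1"
  shows "(\<Prod>k\<in>{k. \<alpha> k \<noteq> 0}. h k (\<alpha> k)) = (\<Prod>k<N. h k (\<alpha> k))"
  by (rule prod.mono_neutral_left) (use assms support_indices_below in auto)

lemma sum_support_indices_below:
  assumes "\<alpha> \<in> indices_below N" "\<And>k. h k 0 = 0"
  shows "(\<Sum>k\<in>{k. \<alpha> k \<noteq> 0}. h k (\<alpha> k)) = (\<Sum>k<N. h k (\<alpha> k))"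
  by (rule sum.mono_neutral_left) (use assms support_indices_below in auto)

lemma monom_indices_below: "\<alpha> \<in> indices_below N \<Longrightarrow> monom \<xi> \<alpha> = (\<Prod>k<N. \<xi> k ^ \<alpha> k)"
  unfolding monom_def by (rule prod_support_indices_below) auto

lemma mi_fact_indices_below: "\<alpha> \<in> indices_below N \<Longrightarrow> mi_fact \<alpha> = (\<Prod>k<N. fact (\<alpha> k))"
  unfolding mi_fact_def by (rule prod_support_indices_below[where h="\<lambda>k j. fact j"]) auto

lemma mi_weight_indices_below:
  "\<alpha> \<in> indices_below N \<Longrightarrow> mi_weight \<alpha> = (\<Prod>k<N. (2 * real k + 2) ^ \<alpha> k)"
  unfolding mi_weight_def by (rule prod_support_indices_below) auto

lemma deg_indices_below: "\<alpha> \<in> indices_below N \<Longrightarrow> deg \<alpha> = (\<Sum>k<N. \<alpha> k)"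
  unfolding deg_def by (rule sum_support_indices_below[where h="\<lambda>k j. j"]) auto

lemma encode_indices_below: "\<alpha> \<in> indices_below N \<Longrightarrow> encode B \<alpha> = (\<Sum>k<N. \<alpha> k * B ^ k)"
  unfolding encode_def by (rule sum_support_indices_below[where h="\<lambda>k j. j * B ^ k"]) auto

lemma mi_fact_pos: "mi_fact \<alpha> > 0"
  unfolding mi_fact_def by (rule prod_pos) auto

lemma mi_weight_ge_1: "mi_weight \<alpha> \<ge> 1"
  unfolding mi_weight_def by (rule prod_ge_1) auto

lemma monom_add:
  assumes "\<alpha> \<in> multi_indices" "\<beta> \<in> multi_indices"
  shows "monom \<xi> (\<lambda>k. \<alpha> k + \<beta> k) = monom \<xi> \<alpha> * monom \<xi> \<beta>"
proof -
  obtain N where "\<alpha> \<in> indices_below N" "\<beta> \<in> indices_below N"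
    using indices_below_common[OF assms] .
  then show ?thesis
    by (simp add: monom_indices_below[OF add_indices_below] monom_indices_below power_add
        prod.distrib)
qed

lemma deg_add:
  assumes "\<alpha> \<in> multi_indices" "\<beta> \<in> multi_indices"
  shows "deg (\<lambda>k. \<alpha> k + \<beta> k) = deg \<alpha> + deg \<beta>"
proof -
  obtain N where "\<alpha> \<in> indices_below N" "\<beta> \<in> indices_below N"
    using indices_below_common[OF assms] .
  then show ?thesis
    by (simp add: deg_indices_below[OF add_indices_below] deg_indices_below sum.distrib)
qed

lemma encode_add:
  assumes "\<alpha> \<in> multi_indices" "\<beta> \<in> multi_indices"
  shows "encode B (\<lambda>k. \<alpha> k + \<beta> k) = encode B \<alpha> + encode B \<beta>"
proof -
  obtain N where "\<alpha> \<in> indices_below N" "\<beta> \<in> indices_below N"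
    using indices_below_common[OF assms] .
  then show ?thesis
    by (simp add: encode_indices_below[OF add_indices_below] encode_indices_below sum.distrib
        algebra_simps)
qed

lemma le_deg: "\<alpha> \<in> multi_indices \<Longrightarrow> \<alpha> k \<le> deg \<alpha>"
  unfolding deg_def multi_indices_def by (cases "\<alpha> k = 0") (auto intro: member_le_sum)

lemma digits_unique:
  fixes B :: nat
  assumes "\<forall>k<N. a k < B" "\<forall>k<N. b k < B" "(\<Sum>k<N. a k * B ^ k) = (\<Sum>k<N. b k * B ^ k)"
  shows "\<forall>k<N. a k = b k"
  using assms
proof (induction N arbitrary: a b)
  case 0
  then show ?case by simp
next
  case (Suc N)
  have shift: "(\<Sum>k<Suc N. f k * B ^ k) = f 0 + B * (\<Sum>k<N. f (Suc k) * B ^ k)" for f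
    by (simp add: sum.lessThan_Suc_shift sum_distrib_left algebra_simps del: sum.lessThan_Suc)
  have digits0: "a 0 < B" "b 0 < B" using Suc.prems by auto
  have eq: "a 0 + B * (\<Sum>k<N. a (Suc k) * B ^ k) = b 0 + B * (\<Sum>k<N. b (Suc k) * B ^ k)"
    using Suc.prems(3) shift by metis
  then have "a 0 = b 0"
    using digits0 by (metis mod_mult_self2 mod_less)
  moreover from this have "(\<Sum>k<N. a (Suc k) * B ^ k) = (\<Sum>k<N. b (Suc k) * B ^ k)"
    using eq digits0 by simp
  then have "\<forall>k<N. a (Suc k) = b (Suc k)"
    by (intro Suc.IH) (use Suc.prems in auto)
  ultimately show ?case by (auto simp: less_Suc_eq_0_disj)
qed

text \<open>Every entry of an index of degree less than \<open>B\<close> is a base-\<open>B\<close> digit.\<close>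

lemma encode_inj:
  assumes "\<alpha> \<in> multi_indices" "\<beta> \<in> multi_indices" "deg \<alpha> < B" "deg \<beta> < B"
    and "encode B \<alpha> = encode B \<beta>"
  shows "\<alpha> = \<beta>"
proof -
  obtain N where N: "\<alpha> \<in> indices_below N" "\<beta> \<in> indices_below N"
    using indices_below_common[OF assms(1,2)] .
  have "\<forall>k<N. \<alpha> k = \<beta> k"
    by (rule digits_unique) (use assms le_deg[of \<alpha>] le_deg[of \<beta>] N in
        \<open>auto simp: encode_indices_below intro: le_less_trans\<close>)
  moreover have "\<forall>k\<ge>N. \<alpha> k = \<beta> k" using N unfolding indices_below_def by auto
  ultimately show ?thesis by (metis not_less ext)
qed

section \<open>Series over multi-indices\<close>

lemma bij_betw_restrict_indices_below:
  "bij_betw (\<lambda>\<alpha>. restrict \<alpha> {..<N}) (indices_below N) (PiE {..<N} (\<lambda>_. UNIV))"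
proof (rule bij_betw_byWitness[where f' = "\<lambda>g k. if k < N then g k else 0"])
  show "\<forall>a\<in>indices_below N. (\<lambda>k. if k < N then restrict a {..<N} k else 0) = a"
    by (auto simp: indices_below_def fun_eq_iff)
  show "\<forall>a'\<in>PiE {..<N} (\<lambda>_. UNIV). restrict (\<lambda>k. if k < N then a' k else 0) {..<N} = a'"
    by (auto simp: fun_eq_iff PiE_def extensional_def)
  show "(\<lambda>\<alpha>. restrict \<alpha> {..<N}) ` indices_below N \<subseteq> PiE {..<N} (\<lambda>_. UNIV)"
    by (intro image_subsetI) (simp add: restrict_PiE_iff)
  show "(\<lambda>g k. if k < N then g k else 0) ` PiE {..<N} (\<lambda>_. UNIV) \<subseteq> indices_below N"
    unfolding indices_below_def by (intro image_subsetI) simp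
qed

lemma infsum_prod_indices_below:
  fixes f :: "nat \<Rightarrow> nat \<Rightarrow> 'c::{banach, real_normed_div_algebra, comm_semiring_1}"
  assumes "\<And>k. (\<lambda>j. norm (f k j)) summable_on UNIV"
  shows "infsum (\<lambda>\<alpha>. \<Prod>k<N. f k (\<alpha> k)) (indices_below N) = (\<Prod>k<N. infsum (f k) UNIV)"
proof -
  have "infsum (\<lambda>\<alpha>. \<Prod>k<N. f k (\<alpha> k)) (indices_below N)
      = infsum (\<lambda>g. \<Prod>k<N. f k (g k)) (PiE {..<N} (\<lambda>_. UNIV))"
    using infsum_reindex_bij_betw[OF bij_betw_restrict_indices_below[of N],
        of "\<lambda>g. \<Prod>k<N. f k (g k)"]
    by (simp cong: prod.cong_simp)
  also have "\<dots> = (\<Prod>k<N. infsum (f k) UNIV)"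
    by (rule infsum_prod_PiE_abs) (use assms in auto)
  finally show ?thesis .
qed

text \<open>If the family were not summable its \<open>infsum\<close> would be the junk value 0, contradicting the
  product formula, whose factors are at least \<open>f k 0 = 1\<close>.\<close>

lemma summable_on_prod_indices_below:
  fixes f :: "nat \<Rightarrow> nat \<Rightarrow> real"
  assumes nonneg: "\<And>k j. f k j \<ge> 0" and summable: "\<And>k. f k summable_on UNIV"
    and at_0: "\<And>k. f k 0 = 1"
  shows "(\<lambda>\<alpha>. \<Prod>k<N. f k (\<alpha> k)) summable_on indices_below N"
proof (rule ccontr)
  assume "\<not> ?thesis"
  then have "infsum (\<lambda>\<alpha>. \<Prod>k<N. f k (\<alpha> k)) (indices_below N) = 0"
    by (simp add: infsum_not_exists)
  moreover have "infsum (\<lambda>\<alpha>. \<Prod>k<N. f k (\<alpha> k)) (indices_below N) = (\<Prod>k<N. infsum (f k) UNIV)"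
    by (rule infsum_prod_indices_below) (use nonneg summable in auto)
  moreover have "infsum (f k) UNIV \<ge> 1" for k
    using finite_sum_le_infsum[OF summable, of "{0}" k] nonneg at_0 by simp
  then have "(\<Prod>k<N. infsum (f k) UNIV) \<ge> 1"
    by (simp add: prod_ge_1)
  ultimately show False by linarith
qed

lemma summable_on_multi_indices_prod:
  fixes f :: "nat \<Rightarrow> nat \<Rightarrow> real"
  assumes nonneg: "\<And>k j. f k j \<ge> 0" and summable: "\<And>k. f k summable_on UNIV"
    and at_0: "\<And>k. f k 0 = 1" and bound: "\<And>N. (\<Prod>k<N. infsum (f k) UNIV) \<le> C"
  shows "(\<lambda>\<alpha>. \<Prod>k\<in>{k. \<alpha> k \<noteq> 0}. f k (\<alpha> k)) summable_on multi_indices"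
proof (rule nonneg_bdd_above_summable_on)
  show "0 \<le> (\<Prod>k\<in>{k. \<alpha> k \<noteq> 0}. f k (\<alpha> k))" for \<alpha>
    by (simp add: prod_nonneg nonneg)
  show "bdd_above (sum (\<lambda>\<alpha>. \<Prod>k\<in>{k. \<alpha> k \<noteq> 0}. f k (\<alpha> k)) ` {F. F \<subseteq> multi_indices \<and> finite F})"
  proof (rule bdd_aboveI2)
    fix F assume "F \<in> {F. F \<subseteq> multi_indices \<and> finite F}"
    then have F: "finite F" "F \<subseteq> multi_indices" by auto
    then obtain N where N: "F \<subseteq> indices_below N" by (rule finite_indices_below)
    have "sum (\<lambda>\<alpha>. \<Prod>k\<in>{k. \<alpha> k \<noteq> 0}. f k (\<alpha> k)) F = sum (\<lambda>\<alpha>. \<Prod>k<N. f k (\<alpha> k)) F"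
      by (rule sum.cong) (use N prod_support_indices_below[where h=f] at_0 in auto)
    also have "\<dots> \<le> infsum (\<lambda>\<alpha>. \<Prod>k<N. f k (\<alpha> k)) (indices_below N)"
      by (rule finite_sum_le_infsum[OF summable_on_prod_indices_below F(1) N])
        (simp_all add: prod_nonneg nonneg summable at_0)
    also have "\<dots> = (\<Prod>k<N. infsum (f k) UNIV)"
      by (rule infsum_prod_indices_below) (use nonneg summable in auto)
    also have "\<dots> \<le> C" by (rule bound)
    finally show "sum (\<lambda>\<alpha>. \<Prod>k\<in>{k. \<alpha> k \<noteq> 0}. f k (\<alpha> k)) F \<le> C" .
  qed
qed

lemma exp_has_sum:
  fixes x :: real
  assumes "x \<ge> 0"
  shows "((\<lambda>j. x ^ j / fact j) has_sum exp x) UNIV"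
proof -
  have "(\<lambda>j. x ^ j / fact j) sums exp x"
    using exp_converges[of x] by (simp add: divide_inverse_commute)
  then show ?thesis by (rule sums_nonneg_imp_has_sum) (use assms in auto)
qed

lemma summable_on_multi_indices_exp:
  fixes x :: "nat \<Rightarrow> real"
  assumes nonneg: "\<And>k. x k \<ge> 0" and summable: "summable x"
  shows "(\<lambda>\<alpha>. \<Prod>k\<in>{k. \<alpha> k \<noteq> 0}. x k ^ \<alpha> k / fact (\<alpha> k)) summable_on multi_indices"
proof (rule summable_on_multi_indices_prod[where C="exp (suminf x)"])
  show "(\<lambda>j. x k ^ j / fact j) summable_on UNIV" for k
    using exp_has_sum nonneg has_sum_imp_summable by blast
  fix N
  have "(\<Prod>k<N. infsum (\<lambda>j. x k ^ j / fact j) UNIV) = exp (\<Sum>k<N. x k)"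
    by (simp add: exp_sum infsumI[OF exp_has_sum] nonneg)
  also have "\<dots> \<le> exp (suminf x)"
    using sum_le_suminf[OF summable, of "{..<N}"] nonneg by auto
  finally show "(\<Prod>k<N. infsum (\<lambda>j. x k ^ j / fact j) UNIV) \<le> exp (suminf x)" .
qed (use nonneg in auto)

section \<open>Hida distributions and the \<open>S\<close>-transform as a power series\<close>

definition neg_norm_term :: "nat \<Rightarrow> ((nat \<Rightarrow> nat) \<Rightarrow> complex) \<Rightarrow> (nat \<Rightarrow> nat) \<Rightarrow> real" where
  "neg_norm_term p c \<alpha> = mi_fact \<alpha> * (norm (c \<alpha>))\<^sup>2 / mi_weight \<alpha> ^ (2 * p)"

lemma hida_distD:
  assumes "hida_dist c"
  shows "\<And>\<alpha>. \<alpha> \<notin> multi_indices \<Longrightarrow> c \<alpha> = 0"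
    and "\<exists>p. neg_norm_term p c summable_on multi_indices"
  using assms unfolding hida_dist_def neg_norm_term_def by auto

lemma hida_distI:
  assumes "\<And>\<alpha>. \<alpha> \<notin> multi_indices \<Longrightarrow> c \<alpha> = 0" "neg_norm_term p c summable_on multi_indices"
  shows "hida_dist c"
  using assms unfolding hida_dist_def neg_norm_term_def by auto

lemma neg_norm_term_nonneg: "neg_norm_term p c \<alpha> \<ge> 0"
  unfolding neg_norm_term_def using mi_fact_pos[of \<alpha>] mi_weight_ge_1[of \<alpha>] by simp

lemma neg_norm_term_antimono:
  assumes "p \<le> q"
  shows "neg_norm_term q c \<alpha> \<le> neg_norm_term p c \<alpha>"
proof -
  have "mi_weight \<alpha> ^ (2 * p) \<le> mi_weight \<alpha> ^ (2 * q)"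
    using mi_weight_ge_1[of \<alpha>] assms by (intro power_increasing) auto
  moreover have "mi_weight \<alpha> ^ (2 * p) > 0" using mi_weight_ge_1[of \<alpha>] by simp
  ultimately show ?thesis
    unfolding neg_norm_term_def using mi_fact_pos[of \<alpha>] by (intro divide_left_mono) auto
qed

lemma hida_dist_common_order:
  assumes "hida_dist c" "hida_dist d"
  obtains p where "neg_norm_term p c summable_on multi_indices"
    "neg_norm_term p d summable_on multi_indices"
proof -
  obtain p q where p: "neg_norm_term p c summable_on multi_indices"
    and q: "neg_norm_term q d summable_on multi_indices"
    using hida_distD(2)[OF assms(1)] hida_distD(2)[OF assms(2)] by blast
  have raise: "neg_norm_term (max p q) e summable_on multi_indices"
    if "neg_norm_term r e summable_on multi_indices" "r \<le> max p q" for r e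
    by (rule summable_on_comparison_test[OF that(1)])
      (use neg_norm_term_antimono[OF that(2)] neg_norm_term_nonneg in auto)
  show thesis by (rule that[OF raise[OF p] raise[OF q]]) simp_all
qed

lemma Sc_finite_support:
  assumes "\<And>k. k \<ge> N \<Longrightarrow> \<xi> k = 0"
  shows "\<xi> \<in> Sc"
  unfolding Sc_def
proof (intro CollectI allI)
  fix p :: nat
  show "summable (\<lambda>k. (norm (\<xi> k))\<^sup>2 * (2 * real k + 2) ^ (2 * p))"
    by (rule summable_finite[of "{..<N}"]) (use assms in auto)
qed

lemma Sc_mult:
  assumes "\<xi> \<in> Sc"
  shows "(\<lambda>k. z * \<xi> k) \<in> Sc"
  unfolding Sc_def
proof (intro CollectI allI)
  fix p :: nat
  have "summable (\<lambda>k. (norm z)\<^sup>2 * ((norm (\<xi> k))\<^sup>2 * (2 * real k + 2) ^ (2 * p)))"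
    by (intro summable_mult) (use assms in \<open>simp add: Sc_def\<close>)
  then show "summable (\<lambda>k. (norm (z * \<xi> k))\<^sup>2 * (2 * real k + 2) ^ (2 * p))"
    by (simp add: norm_mult power_mult_distrib mult.assoc)
qed

lemma summable_Sc_square:
  assumes "\<xi> \<in> Sc"
  shows "summable (\<lambda>k. \<xi> k * \<xi> k)"
proof (rule summable_norm_cancel)
  have "summable (\<lambda>k. (norm (\<xi> k))\<^sup>2 * (2 * real k + 2) ^ (2 * 0))"
    using assms unfolding Sc_def by blast
  then show "summable (\<lambda>k. norm (\<xi> k * \<xi> k))"
    by (simp add: norm_mult power2_eq_square)
qed

lemma prod_weighted_monom:
  fixes \<xi> :: "nat \<Rightarrow> complex"
  assumes "\<alpha> \<in> multi_indices"
  shows "(\<Prod>k\<in>{k. \<alpha> k \<noteq> 0}. ((norm (\<xi> k))\<^sup>2 * (2 * real k + 2) ^ (2 * p)) ^ \<alpha> k / fact (\<alpha> k))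
      = mi_weight \<alpha> ^ (2 * p) * (norm (monom \<xi> \<alpha>))\<^sup>2 / mi_fact \<alpha>"
proof -
  obtain N where N: "\<alpha> \<in> indices_below N" using multi_indices_below[OF assms] .
  have "(\<Prod>k\<in>{k. \<alpha> k \<noteq> 0}. ((norm (\<xi> k))\<^sup>2 * (2 * real k + 2) ^ (2 * p)) ^ \<alpha> k / fact (\<alpha> k))
      = (\<Prod>k<N. ((norm (\<xi> k))\<^sup>2 * (2 * real k + 2) ^ (2 * p)) ^ \<alpha> k / fact (\<alpha> k))"
    by (rule prod_support_indices_below[OF N]) simp
  also have "\<dots> = (\<Prod>k<N. ((2 * real k + 2) ^ \<alpha> k) ^ (2 * p) * (norm (\<xi> k ^ \<alpha> k))\<^sup>2 / fact (\<alpha> k))"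
    by (simp add: power_mult_distrib power_mult[symmetric] mult.commute norm_power)
  also have "\<dots> = mi_weight \<alpha> ^ (2 * p) * (norm (monom \<xi> \<alpha>))\<^sup>2 / mi_fact \<alpha>"
    by (simp add: mi_weight_indices_below[OF N] monom_indices_below[OF N]
        mi_fact_indices_below[OF N]
        prod_norm[symmetric] prod_dividef prod.distrib prod_power_distrib)
  finally show ?thesis .
qed

text \<open>The weighted AM-GM inequality behind the estimate
  \<open>\<bar>c\<^sub>\<alpha> \<xi>\<^sup>\<alpha>\<bar> \<le> \<alpha>! \<bar>c\<^sub>\<alpha>\<bar>\<^sup>2 / \<lambda>\<^sup>2\<^sup>p\<^sup>\<alpha> + \<lambda>\<^sup>2\<^sup>p\<^sup>\<alpha> \<bar>\<xi>\<^sup>\<alpha>\<bar>\<^sup>2 / \<alpha>!\<close>.\<close>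

lemma mult_le_weighted_squares:
  fixes a w x y :: real
  assumes "a > 0" "w > 0" "x \<ge> 0" "y \<ge> 0"
  shows "x * y \<le> a * x\<^sup>2 / w + w * y\<^sup>2 / a"
proof -
  have "0 \<le> (a * x - w * y)\<^sup>2" by simp
  then have "2 * (x * y * (a * w)) \<le> (a * x)\<^sup>2 + (w * y)\<^sup>2"
    by (simp add: power2_diff algebra_simps)
  moreover have "0 \<le> x * y * (a * w)" using assms by simp
  ultimately have "x * y * (a * w) \<le> (a * x)\<^sup>2 + (w * y)\<^sup>2" by linarith
  moreover have "a * x\<^sup>2 / w + w * y\<^sup>2 / a = ((a * x)\<^sup>2 + (w * y)\<^sup>2) / (a * w)"
    using assms by (simp add: field_simps power2_eq_square)
  ultimately show ?thesis
    using assms by (simp add: pos_le_divide_eq)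
qed

lemma summable_norm_S_series:
  assumes "hida_dist c" "\<xi> \<in> Sc"
  shows "(\<lambda>\<alpha>. norm (c \<alpha> * monom \<xi> \<alpha>)) summable_on multi_indices"
proof -
  obtain p where c: "neg_norm_term p c summable_on multi_indices"
    using hida_distD(2)[OF assms(1)] by auto
  define x where "x k = (norm (\<xi> k))\<^sup>2 * (2 * real k + 2) ^ (2 * p)" for k
  have "(\<lambda>\<alpha>. \<Prod>k\<in>{k. \<alpha> k \<noteq> 0}. x k ^ \<alpha> k / fact (\<alpha> k)) summable_on multi_indices"
    by (rule summable_on_multi_indices_exp) (use assms(2) in \<open>auto simp: x_def Sc_def\<close>)
  also have "?this \<longleftrightarrow> (\<lambda>\<alpha>. mi_weight \<alpha> ^ (2 * p) * (norm (monom \<xi> \<alpha>))\<^sup>2 / mi_fact \<alpha>)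
      summable_on multi_indices"
    unfolding x_def by (rule summable_on_cong) (rule prod_weighted_monom)
  finally have \<xi>: "(\<lambda>\<alpha>. mi_weight \<alpha> ^ (2 * p) * (norm (monom \<xi> \<alpha>))\<^sup>2 / mi_fact \<alpha>)
      summable_on multi_indices" .
  show ?thesis
  proof (rule summable_on_comparison_test[OF summable_on_add[OF c \<xi>]])
    show "norm (c \<alpha> * monom \<xi> \<alpha>)
        \<le> neg_norm_term p c \<alpha> + mi_weight \<alpha> ^ (2 * p) * (norm (monom \<xi> \<alpha>))\<^sup>2 / mi_fact \<alpha>" for \<alpha>
      unfolding neg_norm_term_def norm_mult
      by (rule mult_le_weighted_squares) (use mi_fact_pos[of \<alpha>] mi_weight_ge_1[of \<alpha>] in auto)
  qed simp
qed

lemma S_transform_series: "S_transform c \<xi> = infsum (\<lambda>\<alpha>. c \<alpha> * monom \<xi> \<alpha>) multi_indices"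
proof -
  have "mi_fact \<alpha> \<noteq> 0" for \<alpha> using mi_fact_pos[of \<alpha>] by simp
  then show ?thesis
    unfolding S_transform_def dual_pair_def wick_exp_def monom_def[symmetric]
    by (intro infsum_cong) simp
qed

lemma has_sum_S_series:
  assumes "hida_dist c" "\<xi> \<in> Sc"
  shows "((\<lambda>\<alpha>. c \<alpha> * monom \<xi> \<alpha>) has_sum S_transform c \<xi>) multi_indices"
  unfolding S_transform_series
  by (rule has_sum_infsum[OF abs_summable_summable[OF summable_norm_S_series[OF assms]]])

lemma T_transform_eq_S_transform:
  "T_transform c \<xi> = exp (- bil \<xi> \<xi> / 2) * S_transform c (\<lambda>k. \<i> * \<xi> k)"
  unfolding T_transform_def S_transform_def dual_pair_def char_exp_def
  by (simp add: infsum_cmult_right'[symmetric] algebra_simps)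

section \<open>Injectivity of the \<open>S\<close>- and \<open>T\<close>-transforms\<close>

lemma powser_eq_0_coeff:
  fixes a :: "nat \<Rightarrow> complex"
  assumes "\<And>t. (\<lambda>n. a n * t ^ n) sums 0"
  shows "a m = 0"
proof (cases "m = 0")
  case True
  then show ?thesis using assms[of 0] powser_sums_zero_iff by blast
next
  case False
  show ?thesis
  proof (rule ccontr)
    assume "a m \<noteq> 0"
    show False
    proof (rule powser_0_nonzero[where r=1 and a=a and \<xi>=0 and f="\<lambda>_. 0" and m=m])
      fix s :: real
      assume "0 < s" and nonzero: "\<And>z::complex. z \<in> cball 0 s - {0} \<Longrightarrow> (0::complex) \<noteq> 0"
      have "complex_of_real s \<in> cball 0 s - {0}" using \<open>0 < s\<close> by auto
      then show False using nonzero by blast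
    qed (use assms False \<open>a m \<noteq> 0\<close> in auto)
  qed
qed

lemma monom_eq_0_outside:
  fixes \<xi> :: "nat \<Rightarrow> complex"
  assumes "\<alpha> \<in> multi_indices" "\<alpha> \<notin> indices_below N" "\<And>k. k \<ge> N \<Longrightarrow> \<xi> k = 0"
  shows "monom \<xi> \<alpha> = 0"
proof -
  obtain k where k: "k \<ge> N" "\<alpha> k \<noteq> 0" using assms(2) unfolding indices_below_def by auto
  have "finite {k. \<alpha> k \<noteq> 0}" using assms(1) by (simp add: multi_indices_def)
  then show ?thesis unfolding monom_def using k assms(3) by (intro prod_zero) auto
qed

definition indices_of_deg :: "nat \<Rightarrow> nat \<Rightarrow> (nat \<Rightarrow> nat) set" where
  "indices_of_deg N n = {\<alpha> \<in> indices_below N. deg \<alpha> = n}"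

lemma finite_indices_of_deg: "finite (indices_of_deg N n)"
proof (rule finite_subset)
  let ?extend = "\<lambda>g k. if k < N then g k else 0"
  show "indices_of_deg N n \<subseteq> ?extend ` PiE {..<N} (\<lambda>_. {..n})"
  proof
    fix \<alpha> assume \<alpha>: "\<alpha> \<in> indices_of_deg N n"
    then have "\<alpha> = ?extend (restrict \<alpha> {..<N})"
      by (auto simp: indices_of_deg_def indices_below_def fun_eq_iff)
    moreover have "restrict \<alpha> {..<N} \<in> PiE {..<N} (\<lambda>_. {..n})"
    proof -
      have "\<alpha> k \<le> n" for k
        using \<alpha> le_deg[of \<alpha> k] indices_below_subset by (auto simp: indices_of_deg_def)
      then show ?thesis by auto
    qed
    ultimately show "\<alpha> \<in> ?extend ` PiE {..<N} (\<lambda>_. {..n})" by blast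
  qed
qed (intro finite_imageI finite_PiE; simp)

lemma bij_betw_indices_of_deg: "bij_betw snd (Sigma UNIV (indices_of_deg N)) (indices_below N)"
proof (rule bij_betwI')
  show "\<exists>x\<in>Sigma UNIV (indices_of_deg N). \<alpha> = snd x" if "\<alpha> \<in> indices_below N" for \<alpha>
    using that by (intro bexI[of _ "(deg \<alpha>, \<alpha>)"]) (auto simp: indices_of_deg_def)
qed (auto simp: indices_of_deg_def)

text \<open>Along the curve \<open>\<xi>\<^sub>k = t u\<^bsup>B\<^sup>k\<^esup>\<close> (\<open>k < N\<close>) the monomial \<open>\<xi>\<^sup>\<alpha>\<close> separates the degree of \<open>\<alpha>\<close>
  (in \<open>t\<close>) from its base-\<open>B\<close> code (in \<open>u\<close>).\<close>

lemma monom_curve: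
  fixes t u :: complex
  assumes "\<alpha> \<in> indices_below N"
  shows "monom (\<lambda>k. if k < N then t * u ^ (B ^ k) else 0) \<alpha> = t ^ deg \<alpha> * u ^ encode B \<alpha>"
proof -
  have "monom (\<lambda>k. if k < N then t * u ^ (B ^ k) else 0) \<alpha> = (\<Prod>k<N. (t * u ^ (B ^ k)) ^ \<alpha> k)"
    unfolding monom_indices_below[OF assms] by (rule prod.cong) auto
  also have "\<dots> = (\<Prod>k<N. t ^ \<alpha> k) * (\<Prod>k<N. u ^ (\<alpha> k * B ^ k))"
    by (simp add: power_mult_distrib prod.distrib power_mult[symmetric] mult.commute)
  also have "\<dots> = t ^ deg \<alpha> * u ^ encode B \<alpha>"
    by (simp add: deg_indices_below[OF assms] encode_indices_below[OF assms] power_sum)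
  finally show ?thesis .
qed

lemma S_transform_zero_curve_coeff:
  assumes c: "hida_dist c" and zero: "\<forall>\<xi>\<in>Sc. S_transform c \<xi> = 0"
  shows "(\<Sum>\<alpha>\<in>indices_of_deg N n. c \<alpha> * u ^ encode B \<alpha>) = 0"
proof -
  define a where "a n = (\<Sum>\<alpha>\<in>indices_of_deg N n. c \<alpha> * u ^ encode B \<alpha>)" for n
  have "(\<lambda>n. a n * t ^ n) sums 0" for t
  proof -
    define \<xi> where "\<xi> = (\<lambda>k. if k < N then t * u ^ (B ^ k) else 0)"
    define g where "g \<alpha> = c \<alpha> * monom \<xi> \<alpha>" for \<alpha>
    have \<xi>: "\<xi> \<in> Sc" unfolding \<xi>_def by (rule Sc_finite_support[of N]) auto
    have "(g has_sum 0) multi_indices"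
      using has_sum_S_series[OF c \<xi>] zero \<xi> unfolding g_def by simp
    then have "(g has_sum 0) (indices_below N)"
    proof (subst has_sum_cong_neutral[where T=multi_indices and g=g])
      show "g \<alpha> = 0" if "\<alpha> \<in> multi_indices - indices_below N" for \<alpha>
        unfolding g_def using that by (subst monom_eq_0_outside[of _ N]) (auto simp: \<xi>_def)
    qed (use indices_below_subset in auto)
    then have "((\<lambda>(n, \<alpha>). g \<alpha>) has_sum 0) (Sigma UNIV (indices_of_deg N))"
      using has_sum_reindex_bij_betw[OF bij_betw_indices_of_deg, where f=g]
      by (simp add: case_prod_unfold)
    moreover have "(g has_sum (a n * t ^ n)) (indices_of_deg N n)" for n
    proof -
      have "sum g (indices_of_deg N n) = a n * t ^ n"
        unfolding a_def sum_distrib_right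
        by (rule sum.cong) (simp_all add: g_def \<xi>_def monom_curve indices_of_deg_def)
      then show ?thesis using has_sum_finite[OF finite_indices_of_deg, of g N n] by simp
    qed
    ultimately have "((\<lambda>n. a n * t ^ n) has_sum 0) UNIV"
      by (rule has_sum_Sigma'[where f="\<lambda>(n, \<alpha>). g \<alpha>", unfolded prod.case])
    then show ?thesis by (rule has_sum_imp_sums)
  qed
  then show ?thesis unfolding a_def[symmetric] by (rule powser_eq_0_coeff)
qed

text \<open>Grouping the vanishing polynomial of \<open>S_transform_zero_curve_coeff\<close> by exponents isolates
  \<open>c\<^sub>\<alpha>\<close>, because \<open>encode B\<close> is injective in degree \<open>n < B\<close>.\<close>

lemma S_transform_zero_imp_zero:
  assumes c: "hida_dist c" and zero: "\<forall>\<xi>\<in>Sc. S_transform c \<xi> = 0"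
  shows "c = (\<lambda>_. 0)"
proof
  fix \<alpha>0
  show "c \<alpha>0 = 0"
  proof (cases "\<alpha>0 \<in> multi_indices")
    case False
    then show ?thesis using hida_distD(1)[OF c] by simp
  next
    case True
    then obtain N where N: "\<alpha>0 \<in> indices_below N" by (rule multi_indices_below)
    define n where "n = deg \<alpha>0"
    define D where "D = indices_of_deg N n"
    define E where "E = encode (Suc n)"
    define K where "K = (\<Sum>\<alpha>\<in>D. E \<alpha>)"
    define coeff where "coeff j = (\<Sum>\<alpha>\<in>{\<alpha>\<in>D. E \<alpha> = j}. c \<alpha>)" for j
    have D: "finite D" "\<alpha>0 \<in> D"
      using N finite_indices_of_deg by (auto simp: D_def indices_of_deg_def n_def)
    have E_le: "E \<alpha> \<le> K" if "\<alpha> \<in> D" for \<alpha>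
      unfolding K_def by (rule member_le_sum[OF that]) (use D in auto)
    have "(\<Sum>j\<le>K. coeff j * u ^ j) = 0" for u
    proof -
      have "(\<Sum>j\<le>K. coeff j * u ^ j) = (\<Sum>j\<le>K. \<Sum>\<alpha>\<in>{\<alpha>\<in>D. E \<alpha> = j}. c \<alpha> * u ^ E \<alpha>)"
        unfolding coeff_def sum_distrib_right by (rule sum.cong) auto
      also have "\<dots> = (\<Sum>\<alpha>\<in>D. c \<alpha> * u ^ E \<alpha>)"
        by (rule sum.group[OF D(1)]) (use E_le in auto)
      also have "\<dots> = 0"
        unfolding D_def E_def by (rule S_transform_zero_curve_coeff[OF c zero])
      finally show ?thesis .
    qed
    then have "coeff (E \<alpha>0) = 0"
      using polyfun_eq_0[where n=K and c=coeff] E_le[OF D(2)] by auto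
    moreover have "\<alpha> = \<alpha>0" if "\<alpha> \<in> D" "E \<alpha> = E \<alpha>0" for \<alpha>
      using that N indices_below_subset
      by (intro encode_inj) (auto simp: D_def E_def indices_of_deg_def n_def)
    then have "{\<alpha>\<in>D. E \<alpha> = E \<alpha>0} = {\<alpha>0}" using D(2) by auto
    ultimately show ?thesis unfolding coeff_def by simp
  qed
qed

lemma hida_dist_diff:
  assumes "hida_dist c" "hida_dist d"
  shows "hida_dist (\<lambda>\<alpha>. c \<alpha> - d \<alpha>)"
proof -
  obtain p where c: "neg_norm_term p c summable_on multi_indices"
    and d: "neg_norm_term p d summable_on multi_indices"
    using hida_dist_common_order[OF assms] .
  show ?thesis
  proof (rule hida_distI)
    show "c \<alpha> - d \<alpha> = 0" if "\<alpha> \<notin> multi_indices" for \<alpha>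
      using that hida_distD(1)[OF assms(1)] hida_distD(1)[OF assms(2)] by simp
    show "neg_norm_term p (\<lambda>\<alpha>. c \<alpha> - d \<alpha>) summable_on multi_indices"
    proof (rule summable_on_comparison_test)
      show "(\<lambda>\<alpha>. 2 * neg_norm_term p c \<alpha> + 2 * neg_norm_term p d \<alpha>) summable_on multi_indices"
        by (intro summable_on_add summable_on_cmult_right c d)
      fix \<alpha>
      have "(norm (c \<alpha> - d \<alpha>))\<^sup>2 \<le> (norm (c \<alpha>) + norm (d \<alpha>))\<^sup>2"
        by (rule power_mono[OF norm_triangle_ineq4]) simp
      also have "\<dots> \<le> 2 * (norm (c \<alpha>))\<^sup>2 + 2 * (norm (d \<alpha>))\<^sup>2"
        using sum_squares_bound[of "norm (c \<alpha>)" "norm (d \<alpha>)"] by (simp add: power2_sum)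
      finally have "(norm (c \<alpha> - d \<alpha>))\<^sup>2 \<le> 2 * (norm (c \<alpha>))\<^sup>2 + 2 * (norm (d \<alpha>))\<^sup>2" .
      moreover have "mi_fact \<alpha> / mi_weight \<alpha> ^ (2 * p) \<ge> 0"
        using mi_fact_pos[of \<alpha>] mi_weight_ge_1[of \<alpha>] by simp
      ultimately have "mi_fact \<alpha> / mi_weight \<alpha> ^ (2 * p) * (norm (c \<alpha> - d \<alpha>))\<^sup>2
          \<le> mi_fact \<alpha> / mi_weight \<alpha> ^ (2 * p) * (2 * (norm (c \<alpha>))\<^sup>2 + 2 * (norm (d \<alpha>))\<^sup>2)"
        by (rule mult_left_mono)
      then show "neg_norm_term p (\<lambda>\<alpha>. c \<alpha> - d \<alpha>) \<alpha>
          \<le> 2 * neg_norm_term p c \<alpha> + 2 * neg_norm_term p d \<alpha>"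
        unfolding neg_norm_term_def by (simp add: algebra_simps)
    qed (rule neg_norm_term_nonneg)
  qed
qed

lemma S_transform_diff:
  assumes "hida_dist c" "hida_dist d" "\<xi> \<in> Sc"
  shows "S_transform (\<lambda>\<alpha>. c \<alpha> - d \<alpha>) \<xi> = S_transform c \<xi> - S_transform d \<xi>"
proof -
  have "((\<lambda>\<alpha>. c \<alpha> * monom \<xi> \<alpha> + - (d \<alpha> * monom \<xi> \<alpha>))
      has_sum S_transform c \<xi> + - S_transform d \<xi>) multi_indices"
    by (intro has_sum_add has_sum_uminusI has_sum_S_series assms)
  then show ?thesis
    unfolding S_transform_series by (simp add: infsumI algebra_simps)
qed

lemma S_transform_inject:
  assumes "hida_dist c" "hida_dist d" "\<forall>\<xi>\<in>Sc. S_transform c \<xi> = S_transform d \<xi>"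
  shows "c = d"
proof -
  have "(\<lambda>\<alpha>. c \<alpha> - d \<alpha>) = (\<lambda>_. 0)"
    by (rule S_transform_zero_imp_zero[OF hida_dist_diff[OF assms(1,2)]])
      (simp add: S_transform_diff assms)
  then show ?thesis by (simp add: fun_eq_iff)
qed

lemma T_transform_inject:
  assumes "hida_dist c" "hida_dist d" "\<forall>\<xi>\<in>Sc. T_transform c \<xi> = T_transform d \<xi>"
  shows "c = d"
proof (rule S_transform_inject[OF assms(1,2)], intro ballI)
  fix \<eta> assume "\<eta> \<in> Sc"
  then have "T_transform c (\<lambda>k. - \<i> * \<eta> k) = T_transform d (\<lambda>k. - \<i> * \<eta> k)"
    using assms(3) Sc_mult[of \<eta> "- \<i>"] by simp
  then show "S_transform c \<eta> = S_transform d \<eta>"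
    by (simp add: T_transform_eq_S_transform)
qed

section \<open>The Cauchy product of coefficient families\<close>

definition lower_indices :: "(nat \<Rightarrow> nat) \<Rightarrow> (nat \<Rightarrow> nat) set" where
  "lower_indices \<gamma> = {\<alpha>. \<forall>k. \<alpha> k \<le> \<gamma> k}"

definition cauchy_prod ::
    "((nat \<Rightarrow> nat) \<Rightarrow> complex) \<Rightarrow> ((nat \<Rightarrow> nat) \<Rightarrow> complex) \<Rightarrow> (nat \<Rightarrow> nat) \<Rightarrow> complex" where
  "cauchy_prod c d \<gamma> =
    (if \<gamma> \<in> multi_indices then (\<Sum>\<alpha>\<in>lower_indices \<gamma>. c \<alpha> * d (\<lambda>k. \<gamma> k - \<alpha> k)) else 0)"

lemma lower_indices_below:
  assumes "\<gamma> \<in> indices_below N" "\<alpha> \<in> lower_indices \<gamma>"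
  shows "\<alpha> \<in> indices_below N"
proof -
  have "\<alpha> k = 0" if "k \<ge> N" for k
  proof -
    have "\<alpha> k \<le> \<gamma> k" using assms(2) by (simp add: lower_indices_def)
    with that assms(1) show ?thesis by (simp add: indices_below_def)
  qed
  then show ?thesis by (simp add: indices_below_def)
qed

lemma lower_indices_subset:
  assumes "\<gamma> \<in> multi_indices"
  shows "lower_indices \<gamma> \<subseteq> multi_indices"
proof -
  obtain N where "\<gamma> \<in> indices_below N" using multi_indices_below[OF assms] .
  then show ?thesis using lower_indices_below indices_below_subset by blast
qed

lemma lower_indices_eq_image:
  assumes "\<gamma> \<in> indices_below N"
  shows "lower_indices \<gamma> = (\<lambda>g k. if k < N then g k else 0) ` PiE {..<N} (\<lambda>k. {..\<gamma> k})"
proof (intro equalityI subsetI)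
  fix \<alpha> assume \<alpha>: "\<alpha> \<in> lower_indices \<gamma>"
  then have "\<alpha> = (\<lambda>k. if k < N then restrict \<alpha> {..<N} k else 0)"
    using lower_indices_below[OF assms \<alpha>] by (auto simp: indices_below_def fun_eq_iff)
  moreover have "restrict \<alpha> {..<N} \<in> PiE {..<N} (\<lambda>k. {..\<gamma> k})"
    using \<alpha> by (auto simp: lower_indices_def)
  ultimately show "\<alpha> \<in> (\<lambda>g k. if k < N then g k else 0) ` PiE {..<N} (\<lambda>k. {..\<gamma> k})" by blast
qed (use assms in \<open>auto simp: lower_indices_def indices_below_def PiE_def Pi_def\<close>)

lemma finite_lower_indices:
  assumes "\<gamma> \<in> multi_indices"
  shows "finite (lower_indices \<gamma>)"
proof -
  obtain N where N: "\<gamma> \<in> indices_below N" using multi_indices_below[OF assms] .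
  show ?thesis unfolding lower_indices_eq_image[OF N] by (intro finite_imageI finite_PiE) auto
qed

lemma card_lower_indices:
  assumes "\<gamma> \<in> multi_indices"
  shows "card (lower_indices \<gamma>) \<le> 2 ^ deg \<gamma>"
proof -
  obtain N where N: "\<gamma> \<in> indices_below N" using multi_indices_below[OF assms] .
  have "inj_on (\<lambda>g k. if k < N then g k else 0) (PiE {..<N} (\<lambda>k. {..\<gamma> k}))"
  proof (rule inj_onI)
    fix g h assume g: "g \<in> PiE {..<N} (\<lambda>k. {..\<gamma> k})" and h: "h \<in> PiE {..<N} (\<lambda>k. {..\<gamma> k})"
      and eq: "(\<lambda>k. if k < N then g k else 0) = (\<lambda>k. if k < N then h k else 0)"
    show "g = h"
    proof (rule PiE_ext[OF g h])
      show "g k = h k" if "k \<in> {..<N}" for k using fun_cong[OF eq, of k] that by simp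
    qed
  qed
  then have "card (lower_indices \<gamma>) = (\<Prod>k<N. card {..\<gamma> k})"
    unfolding lower_indices_eq_image[OF N] by (simp add: card_image card_PiE)
  also have "\<dots> \<le> (\<Prod>k<N. 2 ^ \<gamma> k)"
    by (rule prod_mono) (auto simp: Suc_le_eq less_exp)
  also have "\<dots> = 2 ^ deg \<gamma>" by (simp add: deg_indices_below[OF N] power_sum)
  finally show ?thesis .
qed

lemma fact_add_le: "(fact (a + b) :: real) \<le> 2 ^ (a + b) * fact a * fact b"
proof -
  have "fact a * fact b * ((a + b) choose a) = (fact (a + b) :: nat)"
    using binomial_fact_lemma[of a "a + b"] by simp
  then have "(fact (a + b) :: real) = fact a * fact b * real ((a + b) choose a)"
    by (metis of_nat_fact of_nat_mult)
  moreover have "real ((a + b) choose a) \<le> 2 ^ (a + b)"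
    using binomial_le_pow2[of "a + b" a] by (metis of_nat_le_iff of_nat_numeral of_nat_power)
  ultimately show ?thesis by (simp add: mult_left_mono mult.commute mult.left_commute)
qed

lemma
  assumes "\<gamma> \<in> multi_indices" "\<alpha> \<in> lower_indices \<gamma>"
  shows mi_weight_lower: "mi_weight \<gamma> = mi_weight \<alpha> * mi_weight (\<lambda>k. \<gamma> k - \<alpha> k)"
    and mi_fact_lower: "mi_fact \<gamma> \<le> 2 ^ deg \<gamma> * mi_fact \<alpha> * mi_fact (\<lambda>k. \<gamma> k - \<alpha> k)"
proof -
  obtain N where \<gamma>: "\<gamma> \<in> indices_below N" using multi_indices_below[OF assms(1)] .
  have \<alpha>: "\<alpha> \<in> indices_below N" by (rule lower_indices_below[OF \<gamma> assms(2)])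
  have \<beta>: "(\<lambda>k. \<gamma> k - \<alpha> k) \<in> indices_below N" by (rule diff_indices_below[OF \<gamma>])
  have split: "\<gamma> k = \<alpha> k + (\<gamma> k - \<alpha> k)" for k using assms(2) by (auto simp: lower_indices_def)
  show "mi_weight \<gamma> = mi_weight \<alpha> * mi_weight (\<lambda>k. \<gamma> k - \<alpha> k)"
    unfolding mi_weight_indices_below[OF \<gamma>] mi_weight_indices_below[OF \<alpha>]
      mi_weight_indices_below[OF \<beta>] prod.distrib[symmetric]
    by (rule prod.cong[OF refl]) (subst split, simp add: power_add)
  have "mi_fact \<gamma> = (\<Prod>k<N. fact (\<alpha> k + (\<gamma> k - \<alpha> k)))"
    unfolding mi_fact_indices_below[OF \<gamma>] using split by (metis (no_types, lifting))
  also have "\<dots> \<le> (\<Prod>k<N. 2 ^ (\<alpha> k + (\<gamma> k - \<alpha> k)) * fact (\<alpha> k) * fact (\<gamma> k - \<alpha> k))"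
    by (rule prod_mono) (simp add: fact_add_le)
  also have "\<dots> = 2 ^ deg \<gamma> * mi_fact \<alpha> * mi_fact (\<lambda>k. \<gamma> k - \<alpha> k)"
    unfolding mi_fact_indices_below[OF \<alpha>] mi_fact_indices_below[OF \<beta>] deg_indices_below[OF \<gamma>]
      prod.distrib power_sum[symmetric]
    using split by (metis (no_types, lifting) sum.cong)
  finally show "mi_fact \<gamma> \<le> 2 ^ deg \<gamma> * mi_fact \<alpha> * mi_fact (\<lambda>k. \<gamma> k - \<alpha> k)" .
qed

lemma four_pow_deg_le_mi_weight:
  assumes "\<gamma> \<in> multi_indices"
  shows "4 ^ deg \<gamma> \<le> mi_weight \<gamma> ^ 2"
proof -
  obtain N where N: "\<gamma> \<in> indices_below N" using multi_indices_below[OF assms] .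
  have "(4::real) ^ deg \<gamma> = (\<Prod>k<N. (2 ^ 2) ^ \<gamma> k)"
    by (simp add: deg_indices_below[OF N] power_sum)
  also have "\<dots> = (\<Prod>k<N. (2 ^ \<gamma> k) ^ 2)"
    by (simp only: power_mult[symmetric] mult.commute)
  also have "\<dots> \<le> (\<Prod>k<N. ((2 * real k + 2) ^ \<gamma> k) ^ 2)"
    by (intro prod_mono conjI power_mono) auto
  also have "\<dots> = mi_weight \<gamma> ^ 2"
    by (simp add: mi_weight_indices_below[OF N] prod_power_distrib)
  finally show ?thesis .
qed

lemma neg_norm_term_cauchy_prod_le:
  assumes "\<gamma> \<in> multi_indices"
  shows "neg_norm_term (Suc p) (cauchy_prod c d) \<gamma>
    \<le> (\<Sum>\<alpha>\<in>lower_indices \<gamma>. neg_norm_term p c \<alpha> * neg_norm_term p d (\<lambda>k. \<gamma> k - \<alpha> k))"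
proof -
  let ?L = "lower_indices \<gamma>" and ?G = "deg \<gamma>"
  define r where "r = mi_fact \<gamma> / mi_weight \<gamma> ^ (2 * Suc p)"
  have r: "r \<ge> 0" unfolding r_def using mi_fact_pos[of \<gamma>] mi_weight_ge_1[of \<gamma>] by simp
  have card: "real (card ?L) \<le> 2 ^ ?G"
    using card_lower_indices[OF assms] by (metis of_nat_le_iff of_nat_numeral of_nat_power)
  have "(norm (cauchy_prod c d \<gamma>))\<^sup>2 \<le> (\<Sum>\<alpha>\<in>?L. norm (c \<alpha> * d (\<lambda>k. \<gamma> k - \<alpha> k)))\<^sup>2"
    unfolding cauchy_prod_def using assms by (simp add: norm_sum power_mono)
  also have "\<dots> \<le> real (card ?L) * (\<Sum>\<alpha>\<in>?L. (norm (c \<alpha>))\<^sup>2 * (norm (d (\<lambda>k. \<gamma> k - \<alpha> k)))\<^sup>2)"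
    using sum_squared_le_sum_of_squares[of "\<lambda>\<alpha>. norm (c \<alpha> * d (\<lambda>k. \<gamma> k - \<alpha> k))" ?L]
    by (simp add: norm_mult power_mult_distrib mult.commute)
  also have "\<dots> \<le> 2 ^ ?G * (\<Sum>\<alpha>\<in>?L. (norm (c \<alpha>))\<^sup>2 * (norm (d (\<lambda>k. \<gamma> k - \<alpha> k)))\<^sup>2)"
    by (rule mult_right_mono[OF card]) (simp add: sum_nonneg)
  finally have norm_bound: "(norm (cauchy_prod c d \<gamma>))\<^sup>2
      \<le> 2 ^ ?G * (\<Sum>\<alpha>\<in>?L. (norm (c \<alpha>))\<^sup>2 * (norm (d (\<lambda>k. \<gamma> k - \<alpha> k)))\<^sup>2)" .
  have "neg_norm_term (Suc p) (cauchy_prod c d) \<gamma> = r * (norm (cauchy_prod c d \<gamma>))\<^sup>2"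
    unfolding neg_norm_term_def r_def by simp
  also have "\<dots> \<le> r * (2 ^ ?G * (\<Sum>\<alpha>\<in>?L. (norm (c \<alpha>))\<^sup>2 * (norm (d (\<lambda>k. \<gamma> k - \<alpha> k)))\<^sup>2))"
    by (rule mult_left_mono[OF norm_bound r])
  also have "\<dots> = (\<Sum>\<alpha>\<in>?L. r * 2 ^ ?G * ((norm (c \<alpha>))\<^sup>2 * (norm (d (\<lambda>k. \<gamma> k - \<alpha> k)))\<^sup>2))"
    by (simp add: sum_distrib_left mult.assoc)
  also have "\<dots> \<le> (\<Sum>\<alpha>\<in>?L. neg_norm_term p c \<alpha> * neg_norm_term p d (\<lambda>k. \<gamma> k - \<alpha> k))"
  proof (rule sum_mono)
    fix \<alpha> assume \<alpha>: "\<alpha> \<in> ?L"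
    define \<beta> where "\<beta> = (\<lambda>k. \<gamma> k - \<alpha> k)"
    have "mi_fact \<gamma> * 2 ^ ?G \<le> 2 ^ ?G * mi_fact \<alpha> * mi_fact \<beta> * 2 ^ ?G"
      by (rule mult_right_mono[OF mi_fact_lower[OF assms \<alpha>, folded \<beta>_def]]) simp
    also have "\<dots> = 4 ^ ?G * (mi_fact \<alpha> * mi_fact \<beta>)"
      by (simp add: power_mult_distrib[symmetric] mult_ac)
    also have "\<dots> \<le> mi_weight \<gamma> ^ 2 * (mi_fact \<alpha> * mi_fact \<beta>)"
      by (rule mult_right_mono[OF four_pow_deg_le_mi_weight[OF assms]])
        (use mi_fact_pos[of \<alpha>] mi_fact_pos[of \<beta>] in simp)
    finally have rb: "r * 2 ^ ?G
        \<le> (mi_fact \<alpha> / mi_weight \<alpha> ^ (2 * p)) * (mi_fact \<beta> / mi_weight \<beta> ^ (2 * p))"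
      using mi_weight_ge_1[of \<alpha>] mi_weight_ge_1[of \<beta>] mi_weight_ge_1[of \<gamma>]
      unfolding r_def mi_weight_lower[OF assms \<alpha>, folded \<beta>_def]
      by (simp add: field_simps power_mult_distrib power2_eq_square power_add)
    have "r * 2 ^ ?G * ((norm (c \<alpha>))\<^sup>2 * (norm (d \<beta>))\<^sup>2)
        \<le> (mi_fact \<alpha> / mi_weight \<alpha> ^ (2 * p)) * (mi_fact \<beta> / mi_weight \<beta> ^ (2 * p))
          * ((norm (c \<alpha>))\<^sup>2 * (norm (d \<beta>))\<^sup>2)"
      by (rule mult_right_mono[OF rb]) simp
    also have "\<dots> = neg_norm_term p c \<alpha> * neg_norm_term p d \<beta>"
      unfolding neg_norm_term_def by simp
    finally show "r * 2 ^ ?G * ((norm (c \<alpha>))\<^sup>2 * (norm (d (\<lambda>k. \<gamma> k - \<alpha> k)))\<^sup>2)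
        \<le> neg_norm_term p c \<alpha> * neg_norm_term p d (\<lambda>k. \<gamma> k - \<alpha> k)"
      unfolding \<beta>_def .
  qed
  finally show ?thesis .
qed

lemma abs_summable_on_times:
  fixes f g :: "'a \<Rightarrow> 'c::real_normed_div_algebra"
  assumes f: "(\<lambda>x. norm (f x)) summable_on A" and g: "(\<lambda>y. norm (g y)) summable_on B"
  shows "(\<lambda>(x, y). norm (f x * g y)) summable_on (A \<times> B)"
proof (rule nonneg_bdd_above_summable_on)
  show "bdd_above (sum (\<lambda>(x, y). norm (f x * g y)) ` {P. P \<subseteq> A \<times> B \<and> finite P})"
  proof (rule bdd_aboveI2)
    fix P assume "P \<in> {P. P \<subseteq> A \<times> B \<and> finite P}"
    then have P: "finite (fst ` P)" "finite (snd ` P)" "fst ` P \<subseteq> A" "snd ` P \<subseteq> B" "finite P"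
      by auto
    have "sum (\<lambda>(x, y). norm (f x * g y)) P \<le> sum (\<lambda>(x, y). norm (f x * g y)) (fst ` P \<times> snd ` P)"
      by (rule sum_mono2) (use P in \<open>force+\<close>)
    also have "\<dots> = sum (\<lambda>x. norm (f x)) (fst ` P) * sum (\<lambda>y. norm (g y)) (snd ` P)"
      by (simp add: sum_product sum.cartesian_product norm_mult)
    also have "\<dots> \<le> infsum (\<lambda>x. norm (f x)) A * infsum (\<lambda>y. norm (g y)) B"
      by (intro mult_mono finite_sum_le_infsum f g P infsum_nonneg sum_nonneg) simp_all
    finally show "sum (\<lambda>(x, y). norm (f x * g y)) P
        \<le> infsum (\<lambda>x. norm (f x)) A * infsum (\<lambda>y. norm (g y)) B" .
  qed
qed auto

lemma has_sum_times_abs: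
  fixes f g :: "'a \<Rightarrow> 'c::{banach, real_normed_field}"
  assumes "(\<lambda>x. norm (f x)) summable_on A" "(\<lambda>y. norm (g y)) summable_on B"
  shows "((\<lambda>(x, y). f x * g y) has_sum infsum f A * infsum g B) (A \<times> B)"
proof -
  have summable: "(\<lambda>(x, y). f x * g y) summable_on (A \<times> B)"
    by (rule abs_summable_summable)
      (use abs_summable_on_times[OF assms] in \<open>simp add: case_prod_unfold\<close>)
  have "infsum f A * infsum g B = infsum (\<lambda>x. infsum (\<lambda>y. f x * g y) B) A"
    by (simp add: infsum_cmult_left'[symmetric] infsum_cmult_right')
  also have "\<dots> = infsum (\<lambda>(x, y). f x * g y) (A \<times> B)"
    by (rule infsum_Sigma'_banach[OF summable])
  finally show ?thesis using has_sum_infsum[OF summable] by simp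
qed

text \<open>\<open>(\<alpha>, \<beta>) \<mapsto> (\<alpha> + \<beta>, \<alpha>)\<close> is a bijection onto the pairs \<open>(\<gamma>, \<alpha>)\<close> with \<open>\<alpha> \<le> \<gamma>\<close>, so a double
  series over pairs of multi-indices may be summed along the antidiagonals \<open>\<alpha> + \<beta> = \<gamma>\<close>.\<close>

lemma has_sum_antidiagonals:
  fixes h :: "(nat \<Rightarrow> nat) \<Rightarrow> (nat \<Rightarrow> nat) \<Rightarrow> 'a::{ab_group_add, uniform_topological_group_add}"
  assumes "((\<lambda>(\<alpha>, \<beta>). h \<alpha> \<beta>) has_sum s) (multi_indices \<times> multi_indices)"
  shows "((\<lambda>\<gamma>. \<Sum>\<alpha>\<in>lower_indices \<gamma>. h \<alpha> (\<lambda>k. \<gamma> k - \<alpha> k)) has_sum s) multi_indices"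
proof (rule has_sum_Sigma'[where f="\<lambda>(\<gamma>, \<alpha>). h \<alpha> (\<lambda>k. \<gamma> k - \<alpha> k)", unfolded prod.case])
  show "((\<lambda>(\<gamma>, \<alpha>). h \<alpha> (\<lambda>k. \<gamma> k - \<alpha> k)) has_sum s) (Sigma multi_indices lower_indices)"
  proof (subst has_sum_reindex_bij_witness[symmetric, where i="\<lambda>(\<gamma>, \<alpha>). (\<alpha>, \<lambda>k. \<gamma> k - \<alpha> k)"
        and j="\<lambda>(\<alpha>, \<beta>). (\<lambda>k. \<alpha> k + \<beta> k, \<alpha>)" and S="multi_indices \<times> multi_indices"
        and g="\<lambda>(\<alpha>, \<beta>). h \<alpha> \<beta>"])
    show "(\<lambda>(\<alpha>, \<beta>). (\<lambda>k. \<alpha> k + \<beta> k, \<alpha>)) a \<in> Sigma multi_indices lower_indices"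
      if "a \<in> multi_indices \<times> multi_indices" for a
      using that add_multi_indices by (auto simp: lower_indices_def)
    show "(\<lambda>(\<gamma>, \<alpha>). (\<alpha>, \<lambda>k. \<gamma> k - \<alpha> k)) b \<in> multi_indices \<times> multi_indices"
      if "b \<in> Sigma multi_indices lower_indices" for b
      using that lower_indices_subset diff_multi_indices by auto
    show "(\<lambda>(\<alpha>, \<beta>). (\<lambda>k. \<alpha> k + \<beta> k, \<alpha>)) ((\<lambda>(\<gamma>, \<alpha>). (\<alpha>, \<lambda>k. \<gamma> k - \<alpha> k)) b) = b"
      if "b \<in> Sigma multi_indices lower_indices" for b
      using that by (auto simp: lower_indices_def fun_eq_iff)
  qed (use assms in auto)
  show "((\<lambda>\<alpha>. h \<alpha> (\<lambda>k. \<gamma> k - \<alpha> k)) has_sum (\<Sum>\<alpha>\<in>lower_indices \<gamma>. h \<alpha> (\<lambda>k. \<gamma> k - \<alpha> k)))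
      (lower_indices \<gamma>)" if "\<gamma> \<in> multi_indices" for \<gamma>
    by (rule has_sum_finite[OF finite_lower_indices[OF that]])
qed

lemma hida_dist_cauchy_prod:
  assumes "hida_dist c" "hida_dist d"
  shows "hida_dist (cauchy_prod c d)"
proof -
  obtain p where c: "neg_norm_term p c summable_on multi_indices"
    and d: "neg_norm_term p d summable_on multi_indices"
    using hida_dist_common_order[OF assms] .
  have "((\<lambda>(\<alpha>, \<beta>). neg_norm_term p c \<alpha> * neg_norm_term p d \<beta>)
      has_sum infsum (neg_norm_term p c) multi_indices * infsum (neg_norm_term p d) multi_indices)
      (multi_indices \<times> multi_indices)"
    by (rule has_sum_times_abs) (simp_all add: neg_norm_term_nonneg c d)
  then have "(\<lambda>\<gamma>. \<Sum>\<alpha>\<in>lower_indices \<gamma>. neg_norm_term p c \<alpha> * neg_norm_term p d (\<lambda>k. \<gamma> k - \<alpha> k))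
      summable_on multi_indices"
    using has_sum_antidiagonals summable_on_def by blast
  then have "neg_norm_term (Suc p) (cauchy_prod c d) summable_on multi_indices"
    by (rule summable_on_comparison_test)
      (simp_all add: neg_norm_term_cauchy_prod_le neg_norm_term_nonneg)
  then show ?thesis
    by (rule hida_distI[rotated]) (simp add: cauchy_prod_def)
qed

lemma S_transform_cauchy_prod:
  assumes "hida_dist c" "hida_dist d" "\<xi> \<in> Sc"
  shows "S_transform (cauchy_prod c d) \<xi> = S_transform c \<xi> * S_transform d \<xi>"
proof -
  have "((\<lambda>(\<alpha>, \<beta>). (c \<alpha> * monom \<xi> \<alpha>) * (d \<beta> * monom \<xi> \<beta>))
      has_sum S_transform c \<xi> * S_transform d \<xi>) (multi_indices \<times> multi_indices)"
    unfolding S_transform_series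
    by (rule has_sum_times_abs) (intro summable_norm_S_series assms)+
  then have "((\<lambda>\<gamma>. \<Sum>\<alpha>\<in>lower_indices \<gamma>. (c \<alpha> * monom \<xi> \<alpha>) * (d (\<lambda>k. \<gamma> k - \<alpha> k)
      * monom \<xi> (\<lambda>k. \<gamma> k - \<alpha> k))) has_sum S_transform c \<xi> * S_transform d \<xi>) multi_indices"
    by (rule has_sum_antidiagonals)
  also have "?this \<longleftrightarrow> ((\<lambda>\<gamma>. cauchy_prod c d \<gamma> * monom \<xi> \<gamma>)
      has_sum S_transform c \<xi> * S_transform d \<xi>) multi_indices"
  proof (rule has_sum_cong)
    fix \<gamma> assume \<gamma>: "\<gamma> \<in> multi_indices"
    have split: "monom \<xi> \<gamma> = monom \<xi> \<alpha> * monom \<xi> (\<lambda>k. \<gamma> k - \<alpha> k)"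
      if "\<alpha> \<in> lower_indices \<gamma>" for \<alpha>
    proof -
      have "\<gamma> = (\<lambda>k. \<alpha> k + (\<gamma> k - \<alpha> k))" using that by (auto simp: lower_indices_def fun_eq_iff)
      then show ?thesis
        using monom_add[of \<alpha> "\<lambda>k. \<gamma> k - \<alpha> k" \<xi>] lower_indices_subset[OF \<gamma>] that
          diff_multi_indices[OF \<gamma>] by auto
    qed
    have "(\<Sum>\<alpha>\<in>lower_indices \<gamma>. (c \<alpha> * monom \<xi> \<alpha>) * (d (\<lambda>k. \<gamma> k - \<alpha> k)
        * monom \<xi> (\<lambda>k. \<gamma> k - \<alpha> k))) = (\<Sum>\<alpha>\<in>lower_indices \<gamma>. c \<alpha> * d (\<lambda>k. \<gamma> k - \<alpha> k) * monom \<xi> \<gamma>)"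
      by (intro sum.cong refl) (simp add: split mult_ac)
    then show "(\<Sum>\<alpha>\<in>lower_indices \<gamma>. (c \<alpha> * monom \<xi> \<alpha>) * (d (\<lambda>k. \<gamma> k - \<alpha> k)
        * monom \<xi> (\<lambda>k. \<gamma> k - \<alpha> k))) = cauchy_prod c d \<gamma> * monom \<xi> \<gamma>"
      unfolding cauchy_prod_def using \<gamma> by (simp add: sum_distrib_right)
  qed
  finally show ?thesis unfolding S_transform_series by (rule infsumI)
qed

section \<open>Absence of zero divisors\<close>

definition leading_index :: "nat \<Rightarrow> ((nat \<Rightarrow> nat) \<Rightarrow> complex) \<Rightarrow> (nat \<Rightarrow> nat) \<Rightarrow> bool" where
  "leading_index B c \<alpha>0 \<longleftrightarrow> c \<alpha>0 \<noteq> 0 \<and>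
    (\<forall>\<alpha>. c \<alpha> \<noteq> 0 \<longrightarrow> deg \<alpha>0 \<le> deg \<alpha> \<and> (deg \<alpha> = deg \<alpha>0 \<longrightarrow> encode B \<alpha>0 \<le> encode B \<alpha>))"

lemma leading_index_exists:
  assumes "c \<alpha> \<noteq> 0"
  obtains \<alpha>0 where "leading_index B c \<alpha>0"
proof -
  define n where "n = (LEAST n. \<exists>\<alpha>. c \<alpha> \<noteq> 0 \<and> deg \<alpha> = n)"
  define m where "m = (LEAST m. \<exists>\<alpha>. c \<alpha> \<noteq> 0 \<and> deg \<alpha> = n \<and> encode B \<alpha> = m)"
  have "\<exists>\<alpha>. c \<alpha> \<noteq> 0 \<and> deg \<alpha> = n"
    unfolding n_def by (rule LeastI_ex) (use assms in blast)
  then have "\<exists>\<alpha>. c \<alpha> \<noteq> 0 \<and> deg \<alpha> = n \<and> encode B \<alpha> = m"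
    using LeastI_ex[of "\<lambda>m. \<exists>\<alpha>. c \<alpha> \<noteq> 0 \<and> deg \<alpha> = n \<and> encode B \<alpha> = m"] unfolding m_def
    by blast
  then obtain \<alpha>0 where \<alpha>0: "c \<alpha>0 \<noteq> 0" "deg \<alpha>0 = n" "encode B \<alpha>0 = m" by blast
  have "deg \<alpha>0 \<le> deg \<alpha>" if "c \<alpha> \<noteq> 0" for \<alpha>
    unfolding \<alpha>0(2) n_def by (rule Least_le) (use that in blast)
  moreover have "encode B \<alpha>0 \<le> encode B \<alpha>" if "c \<alpha> \<noteq> 0" "deg \<alpha> = deg \<alpha>0" for \<alpha>
    unfolding \<alpha>0(3) m_def by (rule Least_le) (use that \<alpha>0(2) in blast)
  ultimately have "leading_index B c \<alpha>0" by (simp add: leading_index_def \<alpha>0(1))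
  then show thesis by (rule that)
qed

text \<open>Multi-indices are ordered by degree first and by their base-\<open>B\<close> code second; since both are
  additive, the product of the leading coefficients is the only contribution to the Cauchy product
  at the sum of the leading indices.\<close>

lemma cauchy_prod_leading_index:
  assumes c: "\<And>\<alpha>. \<alpha> \<notin> multi_indices \<Longrightarrow> c \<alpha> = 0" and d: "\<And>\<alpha>. \<alpha> \<notin> multi_indices \<Longrightarrow> d \<alpha> = 0"
    and \<alpha>0: "leading_index B c \<alpha>0" and \<beta>0: "leading_index B d \<beta>0" and "deg \<alpha>0 < B"
  shows "cauchy_prod c d (\<lambda>k. \<alpha>0 k + \<beta>0 k) = c \<alpha>0 * d \<beta>0"
proof -
  define \<gamma> where "\<gamma> = (\<lambda>k. \<alpha>0 k + \<beta>0 k)"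
  have MI: "\<alpha>0 \<in> multi_indices" "\<beta>0 \<in> multi_indices"
    using \<alpha>0 \<beta>0 c d unfolding leading_index_def by blast+
  then have \<gamma>: "\<gamma> \<in> multi_indices" unfolding \<gamma>_def by (rule add_multi_indices)
  have \<alpha>0_lower: "\<alpha>0 \<in> lower_indices \<gamma>" by (simp add: \<gamma>_def lower_indices_def)
  have others: "c \<alpha> * d (\<lambda>k. \<gamma> k - \<alpha> k) = 0" if "\<alpha> \<in> lower_indices \<gamma>" "\<alpha> \<noteq> \<alpha>0" for \<alpha>
  proof (rule ccontr)
    define \<beta> where "\<beta> = (\<lambda>k. \<gamma> k - \<alpha> k)"
    assume "c \<alpha> * d (\<lambda>k. \<gamma> k - \<alpha> k) \<noteq> 0"
    then have nonzero: "c \<alpha> \<noteq> 0" "d \<beta> \<noteq> 0" unfolding \<beta>_def by auto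
    then have MI': "\<alpha> \<in> multi_indices" "\<beta> \<in> multi_indices" using c d by blast+
    have "(\<lambda>k. \<alpha> k + \<beta> k) = \<gamma>"
      using that(1) by (auto simp: \<beta>_def lower_indices_def fun_eq_iff)
    then have sums: "deg \<alpha> + deg \<beta> = deg \<alpha>0 + deg \<beta>0"
      "encode B \<alpha> + encode B \<beta> = encode B \<alpha>0 + encode B \<beta>0"
      using deg_add[OF MI'] deg_add[OF MI] encode_add[OF MI'] encode_add[OF MI]
      by (auto simp: \<gamma>_def)
    have "deg \<alpha>0 \<le> deg \<alpha>" "deg \<beta>0 \<le> deg \<beta>"
      using \<alpha>0 \<beta>0 nonzero by (auto simp: leading_index_def)
    then have "deg \<alpha> = deg \<alpha>0" "deg \<beta> = deg \<beta>0" using sums(1) by linarith+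
    then have "encode B \<alpha>0 \<le> encode B \<alpha>" "encode B \<beta>0 \<le> encode B \<beta>"
      using \<alpha>0 \<beta>0 nonzero by (auto simp: leading_index_def)
    then have "encode B \<alpha> = encode B \<alpha>0" using sums(2) by linarith
    then have "\<alpha> = \<alpha>0"
      using encode_inj[OF MI'(1) MI(1)] \<open>deg \<alpha> = deg \<alpha>0\<close> \<open>deg \<alpha>0 < B\<close> by simp
    with that(2) show False ..
  qed
  have "cauchy_prod c d \<gamma> = c \<alpha>0 * d (\<lambda>k. \<gamma> k - \<alpha>0 k)"
    unfolding cauchy_prod_def using \<gamma> finite_lower_indices[OF \<gamma>] \<alpha>0_lower others
    by (simp add: sum.remove sum.neutral)
  then show ?thesis by (simp add: \<gamma>_def)
qed

lemma cauchy_prod_eq_0_imp: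
  assumes "\<And>\<alpha>. \<alpha> \<notin> multi_indices \<Longrightarrow> c \<alpha> = 0" "\<And>\<alpha>. \<alpha> \<notin> multi_indices \<Longrightarrow> d \<alpha> = 0"
    and "cauchy_prod c d = (\<lambda>_. 0)"
  shows "c = (\<lambda>_. 0) \<or> d = (\<lambda>_. 0)"
proof (rule ccontr)
  assume "\<not> ?thesis"
  then obtain a b where "c a \<noteq> 0" "d b \<noteq> 0" by (auto simp: fun_eq_iff)
  define B where "B = Suc (deg a)"
  obtain \<alpha>0 where \<alpha>0: "leading_index B c \<alpha>0" using leading_index_exists[of c a] \<open>c a \<noteq> 0\<close> by blast
  obtain \<beta>0 where \<beta>0: "leading_index B d \<beta>0" using leading_index_exists[of d b] \<open>d b \<noteq> 0\<close> by blast
  have "deg \<alpha>0 < B" using \<alpha>0 \<open>c a \<noteq> 0\<close> by (auto simp: leading_index_def B_def less_Suc_eq_le)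
  then have "cauchy_prod c d (\<lambda>k. \<alpha>0 k + \<beta>0 k) = c \<alpha>0 * d \<beta>0"
    using cauchy_prod_leading_index[OF assms(1,2) \<alpha>0 \<beta>0] by blast
  moreover have "c \<alpha>0 * d \<beta>0 \<noteq> 0" using \<alpha>0 \<beta>0 by (simp add: leading_index_def)
  ultimately show False using assms(3) by (metis)
qed

section \<open>A Gaussian distribution\<close>

lemma infsum_indices_below_tendsto:
  fixes F :: "(nat \<Rightarrow> nat) \<Rightarrow> complex"
  assumes summable: "(\<lambda>\<alpha>. norm (F \<alpha>)) summable_on multi_indices"
  shows "(\<lambda>N. infsum F (indices_below N)) \<longlonglongrightarrow> infsum F multi_indices"
proof (rule LIMSEQ_I)
  fix r :: real assume "r > 0"
  define nF where "nF \<alpha> = norm (F \<alpha>)" for \<alpha>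
  have nF: "nF summable_on multi_indices" using summable unfolding nF_def .
  have F: "F summable_on multi_indices" by (rule abs_summable_summable[OF summable])
  obtain P where P: "finite P" "P \<subseteq> multi_indices"
    "dist (sum nF P) (infsum nF multi_indices) \<le> r / 2"
    using infsum_finite_approximation[OF nF, of "r / 2"] \<open>r > 0\<close> by auto
  obtain N0 where N0: "P \<subseteq> indices_below N0" using finite_indices_below[OF P(1,2)] .
  have "norm (infsum F (indices_below N) - infsum F multi_indices) < r" if "N \<ge> N0" for N
  proof -
    have sub: "indices_below N \<subseteq> multi_indices" by (rule indices_below_subset)
    have nF_N: "nF summable_on indices_below N" by (rule summable_on_subset_banach[OF nF sub])
    have "norm (infsum F (indices_below N) - infsum F multi_indices)
        = norm (infsum F (multi_indices - indices_below N))"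
      by (simp add: infsum_Diff[OF F summable_on_subset_banach[OF F sub] sub] norm_minus_commute)
    also have "\<dots> \<le> infsum nF (multi_indices - indices_below N)"
      unfolding nF_def
      by (rule norm_infsum_bound, rule summable_on_subset_banach[OF summable]) blast
    also have "\<dots> = infsum nF multi_indices - infsum nF (indices_below N)"
      by (rule infsum_Diff[OF nF nF_N sub])
    also have "\<dots> \<le> infsum nF multi_indices - sum nF P"
      using N0 indices_below_mono[OF that] finite_sum_le_infsum[OF nF_N P(1)]
      by (auto simp: nF_def)
    also have "\<dots> \<le> r / 2" using P(3) unfolding dist_real_def by linarith
    also have "\<dots> < r" using \<open>r > 0\<close> by simp
    finally show ?thesis .
  qed
  then show "\<exists>N0. \<forall>N\<ge>N0. norm (infsum F (indices_below N) - infsum F multi_indices) < r" by blast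
qed

lemma S_transform_truncation:
  "S_transform c (\<lambda>k. if k < N then \<eta> k else 0) = infsum (\<lambda>\<alpha>. c \<alpha> * monom \<eta> \<alpha>) (indices_below N)"
  unfolding S_transform_series
proof (rule infsum_cong_neutral)
  show "c \<alpha> * monom \<eta> \<alpha> = 0" if "\<alpha> \<in> indices_below N - multi_indices" for \<alpha>
    using that indices_below_subset by auto
  show "c \<alpha> * monom (\<lambda>k. if k < N then \<eta> k else 0) \<alpha> = 0"
    if "\<alpha> \<in> multi_indices - indices_below N" for \<alpha>
    using that by (subst monom_eq_0_outside[of _ N]) auto
  show "c \<alpha> * monom (\<lambda>k. if k < N then \<eta> k else 0) \<alpha> = c \<alpha> * monom \<eta> \<alpha>"
    if "\<alpha> \<in> multi_indices \<inter> indices_below N" for \<alpha>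
    using that by (auto simp: monom_indices_below intro!: prod.cong)
qed

lemma S_transform_truncation_tendsto:
  assumes "hida_dist c" "\<eta> \<in> Sc"
  shows "(\<lambda>N. S_transform c (\<lambda>k. if k < N then \<eta> k else 0)) \<longlonglongrightarrow> S_transform c \<eta>"
  unfolding S_transform_truncation S_transform_series
  by (rule infsum_indices_below_tendsto[OF summable_norm_S_series[OF assms]])

text \<open>The coefficients of \<open>exp (z\<^sup>2 / 2) = \<Sum>\<^sub>j z\<^sup>2\<^sup>j / (2\<^sup>j j!)\<close>.\<close>

definition gauss_coeff :: "nat \<Rightarrow> complex" where
  "gauss_coeff j = (if even j then of_real (1 / (2 ^ (j div 2) * fact (j div 2))) else 0)"

lemma has_sum_even_indices:
  fixes h :: "nat \<Rightarrow> 'a::{comm_monoid_add, topological_space}"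
  assumes "(h has_sum S) UNIV"
  shows "((\<lambda>j. if even j then h (j div 2) else 0) has_sum S) UNIV"
proof -
  have "((\<lambda>j. if even j then h (j div 2) else 0) has_sum S) (range (\<lambda>m. 2 * m))"
    using assms has_sum_reindex[of "\<lambda>m::nat. 2 * m" UNIV "\<lambda>j. if even j then h (j div 2) else 0" S]
    by (simp add: inj_on_def o_def)
  also have "?this \<longleftrightarrow> ((\<lambda>j. if even j then h (j div 2) else 0) has_sum S) UNIV"
    by (rule has_sum_cong_neutral) (auto elim!: evenE)
  finally show ?thesis .
qed

lemma gauss_coeff_term:
  "gauss_coeff j * z ^ j = (if even j then (z\<^sup>2 / 2) ^ (j div 2) /\<^sub>R fact (j div 2) else 0)"
proof (cases "even j")
  case True
  then obtain m where j: "j = 2 * m" by (auto elim!: evenE)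
  have "z ^ (2 * m) = (z\<^sup>2) ^ m" by (simp add: power_mult)
  then show ?thesis using j
    by (simp add: gauss_coeff_def scaleR_conv_of_real power_divide field_simps)
qed (simp add: gauss_coeff_def)

lemma
  fixes z :: complex
  shows has_sum_gauss_coeff: "((\<lambda>j. gauss_coeff j * z ^ j) has_sum exp (z\<^sup>2 / 2)) UNIV"
    and summable_norm_gauss_coeff: "(\<lambda>j. norm (gauss_coeff j * z ^ j)) summable_on UNIV"
proof -
  define h where "h m = (z\<^sup>2 / 2) ^ m /\<^sub>R fact m" for m
  have gauss_coeff_h: "(\<lambda>j. gauss_coeff j * z ^ j) = (\<lambda>j. if even j then h (j div 2) else 0)"
    by (simp add: gauss_coeff_term h_def fun_eq_iff)
  have "(h has_sum exp (z\<^sup>2 / 2)) UNIV"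
    unfolding h_def by (rule norm_summable_imp_has_sum[OF summable_norm_exp exp_converges])
  then show "((\<lambda>j. gauss_coeff j * z ^ j) has_sum exp (z\<^sup>2 / 2)) UNIV"
    unfolding gauss_coeff_h by (rule has_sum_even_indices)
  have "summable (\<lambda>m. norm (h m))" unfolding h_def by (rule summable_norm_exp)
  then have "((\<lambda>m. norm (h m)) has_sum suminf (\<lambda>m. norm (h m))) UNIV"
    by (intro sums_nonneg_imp_has_sum summable_sums) simp_all
  then have "((\<lambda>j. if even j then norm (h (j div 2)) else 0) has_sum suminf (\<lambda>m. norm (h m))) UNIV"
    by (rule has_sum_even_indices)
  moreover have "(\<lambda>j. if even j then norm (h (j div 2)) else 0)
      = (\<lambda>j. norm (gauss_coeff j * z ^ j))"
    by (rule ext) (simp add: fun_cong[OF gauss_coeff_h])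
  ultimately show "(\<lambda>j. norm (gauss_coeff j * z ^ j)) summable_on UNIV"
    using has_sum_imp_summable by metis
qed

lemma fact_norm_gauss_coeff_le: "fact j * (norm (gauss_coeff j))\<^sup>2 \<le> 1"
proof (cases "even j")
  case True
  then obtain m where j: "j = 2 * m" by (auto elim!: evenE)
  have "(fact (2 * m) :: real) \<le> 2 ^ (m + m) * fact m * fact m"
    using fact_add_le[of m m] by (simp add: mult_2)
  also have "\<dots> = (2 ^ m * fact m) ^ 2" by (simp add: power_add power2_eq_square mult_ac)
  finally have "(fact (2 * m) :: real) \<le> (2 ^ m * fact m) ^ 2" .
  moreover have "gauss_coeff j = complex_of_real (1 / (2 ^ m * fact m))"
    using j by (simp add: gauss_coeff_def)
  then have "norm (gauss_coeff j) = 1 / (2 ^ m * fact m)"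
    by (simp only: norm_of_real) simp
  ultimately show ?thesis using j by (simp add: power_divide)
qed (simp add: gauss_coeff_def)

definition gauss_dist :: "(nat \<Rightarrow> nat) \<Rightarrow> complex" where
  "gauss_dist \<alpha> = (if \<alpha> \<in> multi_indices then (\<Prod>k\<in>{k. \<alpha> k \<noteq> 0}. gauss_coeff (\<alpha> k)) else 0)"

lemma gauss_dist_indices_below:
  assumes "\<alpha> \<in> indices_below N"
  shows "gauss_dist \<alpha> = (\<Prod>k<N. gauss_coeff (\<alpha> k))"
proof -
  have "(\<Prod>k\<in>{k. \<alpha> k \<noteq> 0}. gauss_coeff (\<alpha> k)) = (\<Prod>k<N. gauss_coeff (\<alpha> k))"
    by (rule prod_support_indices_below[OF assms]) (simp add: gauss_coeff_def)
  then show ?thesis using assms indices_below_subset by (auto simp: gauss_dist_def)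
qed

lemma one_div_one_minus_le_exp:
  fixes r :: real
  assumes "0 \<le> r" "r \<le> 1/2"
  shows "1 / (1 - r) \<le> exp (2 * r)"
proof -
  have "0 \<le> r * (1 - 2 * r)" using assms by simp
  then have "1 \<le> (1 + 2 * r) * (1 - r)" by (simp add: algebra_simps)
  then have "1 / (1 - r) \<le> 1 + 2 * r" using assms by (simp add: divide_le_eq)
  also have "\<dots> \<le> exp (2 * r)" by (rule exp_ge_add_one_self_aux) (use assms in simp)
  finally show ?thesis .
qed

lemma hida_dist_gauss_dist: "hida_dist gauss_dist"
proof (rule hida_distI[where p=1])
  show "gauss_dist \<alpha> = 0" if "\<alpha> \<notin> multi_indices" for \<alpha> using that by (simp add: gauss_dist_def)
  define r where "r k = inverse ((2 * real k + 2) ^ 2)" for k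
  have r: "0 \<le> r k" "r k \<le> 1/2" for k
  proof -
    have "(2::real) ^ 2 \<le> (2 * real k + 2) ^ 2" by (intro power_mono) auto
    then have "r k \<le> inverse (2 ^ 2)" unfolding r_def by (intro le_imp_inverse_le) auto
    then show "r k \<le> 1/2" by simp
  qed (simp add: r_def)
  have "summable (\<lambda>n. inverse (real (Suc n) ^ 2))"
    using inverse_power_summable[of 2, where 'a=real]
    by (subst summable_Suc_iff[where f="\<lambda>n. inverse (real n ^ 2)"]) simp
  then have summable_r: "summable r"
    by (rule summable_comparison_test'[where N=0])
      (auto simp: r_def intro!: le_imp_inverse_le power_mono)
  have geom: "((\<lambda>j. r k ^ j) has_sum 1 / (1 - r k)) UNIV" for k
    by (rule sums_nonneg_imp_has_sum) (use r[of k] in \<open>auto intro!: geometric_sums\<close>)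
  have "(\<lambda>\<alpha>. \<Prod>k\<in>{k. \<alpha> k \<noteq> 0}. r k ^ \<alpha> k) summable_on multi_indices"
  proof (rule summable_on_multi_indices_prod[where C="exp (2 * suminf r)"])
    fix N
    have "(\<Prod>k<N. infsum (\<lambda>j. r k ^ j) UNIV) \<le> (\<Prod>k<N. exp (2 * r k))"
    proof (rule prod_mono)
      fix k
      have "1 / (1 - r k) \<le> exp (2 * r k)" by (rule one_div_one_minus_le_exp[OF r])
      moreover have "0 \<le> 1 / (1 - r k)" using r(2)[of k] by simp
      ultimately show "0 \<le> infsum (\<lambda>j. r k ^ j) UNIV \<and> infsum (\<lambda>j. r k ^ j) UNIV \<le> exp (2 * r k)"
        by (simp add: infsumI[OF geom])
    qed
    also have "\<dots> \<le> exp (2 * suminf r)"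
      using sum_le_suminf[OF summable_r, of "{..<N}"] r
      by (simp add: exp_sum[symmetric] sum_distrib_left[symmetric])
    finally show "(\<Prod>k<N. infsum (\<lambda>j. r k ^ j) UNIV) \<le> exp (2 * suminf r)" .
  qed (use r geom[THEN has_sum_imp_summable] in auto)
  then show "neg_norm_term 1 gauss_dist summable_on multi_indices"
  proof (rule summable_on_comparison_test)
    fix \<alpha> assume "\<alpha> \<in> multi_indices"
    then obtain N where N: "\<alpha> \<in> indices_below N" by (rule multi_indices_below)
    have "neg_norm_term 1 gauss_dist \<alpha>
        = (\<Prod>k<N. fact (\<alpha> k) * (norm (gauss_coeff (\<alpha> k)))\<^sup>2 / ((2 * real k + 2) ^ \<alpha> k)\<^sup>2)"
      unfolding neg_norm_term_def gauss_dist_indices_below[OF N] mi_fact_indices_below[OF N]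
        mi_weight_indices_below[OF N]
      by (simp add: prod_norm[symmetric] prod_power_distrib[symmetric] prod_dividef prod.distrib)
    also have "\<dots> \<le> (\<Prod>k<N. r k ^ \<alpha> k)"
    proof (rule prod_mono)
      fix k
      have "fact (\<alpha> k) * (norm (gauss_coeff (\<alpha> k)))\<^sup>2 / ((2 * real k + 2) ^ \<alpha> k)\<^sup>2
          \<le> 1 / ((2 * real k + 2) ^ \<alpha> k)\<^sup>2"
        by (rule divide_right_mono[OF fact_norm_gauss_coeff_le]) simp
      also have "\<dots> = r k ^ \<alpha> k"
        unfolding r_def
        by (simp add: power_inverse[symmetric] power_mult[symmetric] mult.commute divide_inverse)
      finally show "0 \<le> fact (\<alpha> k) * (norm (gauss_coeff (\<alpha> k)))\<^sup>2 / ((2 * real k + 2) ^ \<alpha> k)\<^sup>2 \<and>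
          fact (\<alpha> k) * (norm (gauss_coeff (\<alpha> k)))\<^sup>2 / ((2 * real k + 2) ^ \<alpha> k)\<^sup>2 \<le> r k ^ \<alpha> k"
        by simp
    qed
    also have "\<dots> = (\<Prod>k\<in>{k. \<alpha> k \<noteq> 0}. r k ^ \<alpha> k)"
      by (rule prod_support_indices_below[OF N, symmetric]) simp
    finally show "neg_norm_term 1 gauss_dist \<alpha> \<le> (\<Prod>k\<in>{k. \<alpha> k \<noteq> 0}. r k ^ \<alpha> k)" .
  qed (rule neg_norm_term_nonneg)
qed

lemma S_transform_gauss_dist:
  assumes "\<eta> \<in> Sc"
  shows "S_transform gauss_dist \<eta> = exp (bil \<eta> \<eta> / 2)"
proof (rule LIMSEQ_unique[OF S_transform_truncation_tendsto[OF hida_dist_gauss_dist assms]])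
  have "S_transform gauss_dist (\<lambda>k. if k < N then \<eta> k else 0)
      = infsum (\<lambda>\<alpha>. \<Prod>k<N. gauss_coeff (\<alpha> k) * \<eta> k ^ \<alpha> k) (indices_below N)" for N
    unfolding S_transform_truncation
    by (intro infsum_cong) (simp add: gauss_dist_indices_below monom_indices_below prod.distrib)
  also have "\<dots> N = (\<Prod>k<N. exp ((\<eta> k)\<^sup>2 / 2))" for N
    by (subst infsum_prod_indices_below[OF summable_norm_gauss_coeff])
      (simp add: infsumI[OF has_sum_gauss_coeff])
  also have "\<dots> N = exp (\<Sum>k<N. \<eta> k * \<eta> k / 2)" for N
    by (simp add: exp_sum power2_eq_square)
  finally have "S_transform gauss_dist (\<lambda>k. if k < N then \<eta> k else 0) = exp (\<Sum>k<N. \<eta> k * \<eta> k / 2)"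
    for N .
  moreover have "(\<lambda>N. exp (\<Sum>k<N. \<eta> k * \<eta> k / 2)) \<longlonglongrightarrow> exp (bil \<eta> \<eta> / 2)"
    unfolding bil_def using summable_Sc_square[OF assms]
    by (intro tendsto_exp) (simp add: tendsto_divide summable_LIMSEQ flip: sum_divide_distrib)
  ultimately show "(\<lambda>N. S_transform gauss_dist (\<lambda>k. if k < N then \<eta> k else 0))
      \<longlonglongrightarrow> exp (bil \<eta> \<eta> / 2)" by simp
qed

section \<open>Wick product and convolution\<close>

lemma wick_eq_cauchy_prod:
  assumes "hida_dist c" "hida_dist d"
  shows "wick c d = cauchy_prod c d"
  unfolding wick_def
proof (rule the_equality)
  show "hida_dist (cauchy_prod c d) \<and>
      (\<forall>\<xi>\<in>Sc. S_transform (cauchy_prod c d) \<xi> = S_transform c \<xi> * S_transform d \<xi>)"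
    using hida_dist_cauchy_prod S_transform_cauchy_prod assms by blast
  show "e = cauchy_prod c d"
    if "hida_dist e \<and> (\<forall>\<xi>\<in>Sc. S_transform e \<xi> = S_transform c \<xi> * S_transform d \<xi>)" for e
    using that
    by (intro S_transform_inject) (simp_all add: hida_dist_cauchy_prod S_transform_cauchy_prod assms)
qed

lemma bil_i_times:
  assumes "\<xi> \<in> Sc"
  shows "bil (\<lambda>k. \<i> * \<xi> k) (\<lambda>k. \<i> * \<xi> k) = - bil \<xi> \<xi>"
  using suminf_minus[OF summable_Sc_square[OF assms]] by (simp add: bil_def algebra_simps)

lemma conv_eq_cauchy_prod:
  assumes "hida_dist c" "hida_dist d"
  shows "conv c d = cauchy_prod gauss_dist (cauchy_prod c d)"
  unfolding conv_def
proof (rule the_equality)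
  have cd: "hida_dist (cauchy_prod c d)" by (rule hida_dist_cauchy_prod[OF assms])
  have T: "T_transform (cauchy_prod gauss_dist (cauchy_prod c d)) \<xi>
      = T_transform c \<xi> * T_transform d \<xi>"
    if "\<xi> \<in> Sc" for \<xi>
  proof -
    define \<eta> where "\<eta> = (\<lambda>k. \<i> * \<xi> k)"
    define E where "E = exp (- (bil \<xi> \<xi> / 2))"
    have \<eta>: "\<eta> \<in> Sc" unfolding \<eta>_def by (rule Sc_mult[OF that])
    have gauss: "S_transform gauss_dist \<eta> = E"
      using S_transform_gauss_dist[OF \<eta>] bil_i_times[OF that] by (simp add: \<eta>_def E_def)
    have "T_transform (cauchy_prod gauss_dist (cauchy_prod c d)) \<xi>
        = E * (E * (S_transform c \<eta> * S_transform d \<eta>))"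
      by (simp add: T_transform_eq_S_transform E_def[symmetric] \<eta>_def[symmetric] gauss
          S_transform_cauchy_prod[OF hida_dist_gauss_dist cd \<eta>] S_transform_cauchy_prod[OF assms \<eta>])
    also have "\<dots> = T_transform c \<xi> * T_transform d \<xi>"
      by (simp add: T_transform_eq_S_transform E_def[symmetric] \<eta>_def[symmetric] mult_ac)
    finally show ?thesis .
  qed
  show "hida_dist (cauchy_prod gauss_dist (cauchy_prod c d)) \<and>
      (\<forall>\<xi>\<in>Sc. T_transform (cauchy_prod gauss_dist (cauchy_prod c d)) \<xi>
        = T_transform c \<xi> * T_transform d \<xi>)"
    using hida_dist_cauchy_prod[OF hida_dist_gauss_dist cd] T by blast
  show "e = cauchy_prod gauss_dist (cauchy_prod c d)"
    if "hida_dist e \<and> (\<forall>\<xi>\<in>Sc. T_transform e \<xi> = T_transform c \<xi> * T_transform d \<xi>)" for e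
    using that T
    by (intro T_transform_inject hida_dist_cauchy_prod hida_dist_gauss_dist cd) simp_all
qed

lemma gauss_dist_nonzero: "gauss_dist \<noteq> (\<lambda>_. 0)"
proof -
  have "gauss_dist (\<lambda>_. 0) = 1" by (simp add: gauss_dist_def multi_indices_def)
  then show ?thesis by (metis zero_neq_one)
qed

theorem theorem2:
  fixes \<Phi> \<Psi> :: "(nat \<Rightarrow> nat) \<Rightarrow> complex"
  assumes "hida_dist \<Phi>" and "hida_dist \<Psi>"
  shows "(wick \<Phi> \<Psi> = (\<lambda>_. 0) \<longrightarrow> \<Phi> = (\<lambda>_. 0) \<or> \<Psi> = (\<lambda>_. 0)) \<and>
         (conv \<Phi> \<Psi> = (\<lambda>_. 0) \<longrightarrow> \<Phi> = (\<lambda>_. 0) \<or> \<Psi> = (\<lambda>_. 0))"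
proof -
  have \<Phi>\<Psi>: "cauchy_prod \<Phi> \<Psi> = (\<lambda>_. 0) \<Longrightarrow> \<Phi> = (\<lambda>_. 0) \<or> \<Psi> = (\<lambda>_. 0)"
    using hida_distD(1)[OF assms(1)] hida_distD(1)[OF assms(2)] by (rule cauchy_prod_eq_0_imp)
  have "cauchy_prod gauss_dist (cauchy_prod \<Phi> \<Psi>) = (\<lambda>_. 0) \<Longrightarrow> cauchy_prod \<Phi> \<Psi> = (\<lambda>_. 0)"
    using cauchy_prod_eq_0_imp[of gauss_dist "cauchy_prod \<Phi> \<Psi>"] gauss_dist_nonzero
    by (auto simp: gauss_dist_def cauchy_prod_def)
  then show ?thesis
    using \<Phi>\<Psi> wick_eq_cauchy_prod[OF assms] conv_eq_cauchy_prod[OF assms] by auto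
qed

end
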